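(* Consider $X_t=\mu_t+e_t$, $1\le t\le T$, with $Ee_t=0$, under the at-most-one-change alternative $\mu_1=\cdots=\mu_{t^*}$, $\mu_{t^*+1}=\cdots=\mu_T$, where $1<t^*<T$ and $\Delta=\mu_{t^*+1}-\mu_{t^*}$ may both depend on $T$. Define $$A_T=\frac1{T^{1/2}}\max_{1\le t\le T}\Big|\sum_{s=1}^tX_s-\frac tT\sum_{s=1}^TX_s\Big|,\qquad D_T=\max_{t_T\le t\le T-t_T}\left|\frac1t\sum_{s=1}^tX_s-\frac1{T-t}\sum_{s=t+1}^TX_s\right|.$$ (i) If Assumption (A) holds, then $A_T\xrightarrow{P}\infty$ if and only if $T^{-3/2}t^*(T-t^* )|\Delta|\to\infty$. (ii) If $t_T\to\infty$, $t_T/T\to0$ and Assumption (A) holds, then $t_T^{1/2}D_T\xrightarrow{P}\infty$ if and only if $\min(t^*,T-t^*,t_T)\,t_T^{-1/2}|\Delta|\to\infty$.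
   Context: Assumption (A): for each $T$ there are independent standard Wiener processes $\{W_{T,1}(x),0\le x\le T/2\}$, $\{W_{T,2}(x),0\le x\le T/2\}$ with $\max_{1\le x\le T/2}x^{-\kappa}|\sum_{s=1}^{\lfloor x\rfloor}e_s-\sigma W_{T,1}(x)|=O_P(1)$ and $\max_{T/2\le x\le T-1}(T-x)^{-\kappa}|\sum_{s=\lfloor x\rfloor+1}^{T}e_s-\sigma W_{T,2}(T-x)|=O_P(1)$, for some $\sigma>0$, $0<\kappa<1/2$. *)

theory Defs
  imports "HOL-Probability.Probability"
begin

definition std_wiener_on :: "'a measure \<Rightarrow> real \<Rightarrow> (real \<Rightarrow> 'a \<Rightarrow> real) \<Rightarrow> bool" where
  "std_wiener_on M L W \<longleftrightarrow>
     (\<forall>x\<in>{0..L}. W x \<in> borel_measurable M) \<and>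
     (AE \<omega> in M. W 0 \<omega> = 0 \<and> continuous_on {0..L} (\<lambda>x. W x \<omega>)) \<and>
     (\<forall>s t. 0 \<le> s \<and> s < t \<and> t \<le> L \<longrightarrow>
        distributed M lborel (\<lambda>\<omega>. W t \<omega> - W s \<omega>)
          (\<lambda>y. ennreal (normal_density 0 (sqrt (t - s)) y))) \<and>
     (\<forall>(n::nat) (u::nat \<Rightarrow> real). 0 \<le> u 0 \<and> u n \<le> L \<and> (\<forall>i<n. u i < u (Suc i)) \<longrightarrow>
        prob_space.indep_vars M (\<lambda>_. borel) (\<lambda>i \<omega>. W (u (Suc i)) \<omega> - W (u i) \<omega>) {..<n})"

definition indep_processes_on :: "'a measure \<Rightarrow> real \<Rightarrow> (real \<Rightarrow> 'a \<Rightarrow> real) \<Rightarrow> (real \<Rightarrow> 'a \<Rightarrow> real) \<Rightarrow> bool" where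
  "indep_processes_on M L W1 W2 \<longleftrightarrow>
     prob_space.indep_var M (Pi\<^sub>M {0..L} (\<lambda>_. borel)) (\<lambda>\<omega>. \<lambda>x\<in>{0..L}. W1 x \<omega>)
                            (Pi\<^sub>M {0..L} (\<lambda>_. borel)) (\<lambda>\<omega>. \<lambda>x\<in>{0..L}. W2 x \<omega>)"

text \<open>O_P(1) for the supremum over x \<in> I T of F T x (outer probability, to avoid measurability issues):
  for every eps > 0 there is C such that for all large T, P*(sup_{x \<in> I T} F T x > C) < eps.\<close>
definition OP1_sup :: "'a measure \<Rightarrow> (nat \<Rightarrow> real set) \<Rightarrow> (nat \<Rightarrow> real \<Rightarrow> 'a \<Rightarrow> real) \<Rightarrow> bool" where
  "OP1_sup M I F \<longleftrightarrow>
     (\<forall>\<epsilon>>0. \<exists>C. \<exists>T0. \<forall>T\<ge>T0. \<exists>A\<in>sets M.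
        {\<omega>\<in>space M. \<exists>x\<in>I T. F T x \<omega> > C} \<subseteq> A \<and> measure M A < \<epsilon>)"

text \<open>Assumption (A) for the error sequence e_1, e_2, ... (index 0 unused).\<close>
definition assumption_A :: "'a measure \<Rightarrow> (nat \<Rightarrow> 'a \<Rightarrow> real) \<Rightarrow> bool" where
  "assumption_A M e \<longleftrightarrow>
    (\<exists>\<sigma>>0. \<exists>\<kappa>. 0 < \<kappa> \<and> \<kappa> < 1/2 \<and>
      (\<exists>W1 W2 :: nat \<Rightarrow> real \<Rightarrow> 'a \<Rightarrow> real.
         (\<forall>T. std_wiener_on M (real T / 2) (W1 T) \<and> std_wiener_on M (real T / 2) (W2 T) \<and>
              indep_processes_on M (real T / 2) (W1 T) (W2 T)) \<and>
         OP1_sup M (\<lambda>T. {1 .. real T / 2})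
           (\<lambda>T x \<omega>. x powr (-\<kappa>) * \<bar>(\<Sum>s=1..nat \<lfloor>x\<rfloor>. e s \<omega>) - \<sigma> * W1 T x \<omega>\<bar>) \<and>
         OP1_sup M (\<lambda>T. {real T / 2 .. real T - 1})
           (\<lambda>T x \<omega>. (real T - x) powr (-\<kappa>) *
              \<bar>(\<Sum>s\<in>{nat \<lfloor>x\<rfloor> + 1 .. T}. e s \<omega>) - \<sigma> * W2 T (real T - x) \<omega>\<bar>)))"

definition A_stat :: "(nat \<Rightarrow> 'a \<Rightarrow> real) \<Rightarrow> nat \<Rightarrow> 'a \<Rightarrow> real" where
  "A_stat X T \<omega> = (1 / sqrt (real T)) *
     Max ((\<lambda>t. \<bar>(\<Sum>s=1..t. X s \<omega>) - real t / real T * (\<Sum>s=1..T. X s \<omega>)\<bar>) ` {1..T})"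

definition D_stat :: "(nat \<Rightarrow> 'a \<Rightarrow> real) \<Rightarrow> nat \<Rightarrow> nat \<Rightarrow> 'a \<Rightarrow> real" where
  "D_stat X T m \<omega> =
     Max ((\<lambda>t. \<bar>(\<Sum>s=1..t. X s \<omega>) / real t - (\<Sum>s=t+1..T. X s \<omega>) / real (T - t)\<bar>) ` {m..T - m})"

definition diverges_in_prob :: "'a measure \<Rightarrow> (nat \<Rightarrow> 'a \<Rightarrow> real) \<Rightarrow> bool" where
  "diverges_in_prob M Y \<longleftrightarrow>
     (\<forall>C. ((\<lambda>T. measure M {\<omega>\<in>space M. Y T \<omega> \<le> C}) \<longlongrightarrow> 0) sequentially)"

end

theory Submission
  imports Defs
begin

text \<open>
  Both statistics are maxima of absolute values of a deterministic drift plus a noise term built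
  from the partial sums of the errors. The drift is maximal at \<open>t*\<close> (for \<open>A\<^sub>T\<close>) and at the
  point of \<open>[t\<^sub>T, T - t\<^sub>T]\<close> closest to \<open>t*\<close> (for \<open>D\<^sub>T\<close>), where it equals the quantity in the
  respective criterion, so each statistic differs from that quantity by at most a maximum of noise
  terms. Assumption (A) replaces the partial sums by Wiener processes up to errors of order
  \<open>x\<^sup>\<kappa>\<close>, and chaining with Gaussian fourth moments shows that
  \<open>max {\<bar>W u\<bar> | u \<le> T/2} / sqrt T\<close> and \<open>sqrt t\<^sub>T * max {\<bar>W u\<bar> / u | t\<^sub>T \<le> u \<le> T/2}\<close> are
  bounded in probability. A deterministic sequence perturbed by a term that is bounded in probability
  diverges in probability exactly when the sequence tends to infinity.
\<close>

section \<open>Maxima of Gaussian increments\<close>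

lemma gaussian_tail_fourth_moment:
  assumes "prob_space M" and "0 < s" and "0 < a"
    and dist: "distributed M lborel X (\<lambda>y. ennreal (normal_density 0 (sqrt s) y))"
  shows "measure M {\<omega>\<in>space M. a < \<bar>X \<omega>\<bar>} \<le> 3 * s ^ 2 / a ^ 4"
proof -
  interpret prob_space M by fact
  have [measurable]: "X \<in> borel_measurable M"
    using dist by (simp add: distributed_def)
  have moment: "has_bochner_integral lborel (\<lambda>x. normal_density 0 (sqrt s) x * (x - 0) ^ (2 * 2))
      (fact (2 * 2) / ((2 / (sqrt s)\<^sup>2) ^ 2 * fact 2))"
    by (rule normal_moment_even) (use \<open>0 < s\<close> in auto)
  have "(fact (2 * 2) / ((2 / (sqrt s)\<^sup>2) ^ 2 * fact 2) :: real) = 3 * s ^ 2"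
    using \<open>0 < s\<close> by (simp add: fact_numeral power2_eq_square field_simps)
  with moment have int_density: "integrable lborel (\<lambda>x. normal_density 0 (sqrt s) x * x ^ 4)"
    and val_density: "(\<integral>x. normal_density 0 (sqrt s) x * x ^ 4 \<partial>lborel) = 3 * s ^ 2"
    by (simp_all add: has_bochner_integral_iff)
  have int: "integrable M (\<lambda>\<omega>. X \<omega> ^ 4)"
    using distributed_integrable[OF dist, of "\<lambda>x. x ^ 4"] int_density by (simp add: normal_density_nonneg)
  have val: "(\<integral>\<omega>. X \<omega> ^ 4 \<partial>M) = 3 * s ^ 2"
    using distributed_integral[OF dist, of "\<lambda>x. x ^ 4"] val_density by (simp add: normal_density_nonneg)
  have "{\<omega>\<in>space M. a < \<bar>X \<omega>\<bar>} \<subseteq> {\<omega>\<in>space M. a ^ 4 \<le> X \<omega> ^ 4}"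
  proof safe
    fix \<omega> assume "a < \<bar>X \<omega>\<bar>"
    then have "a ^ 4 \<le> \<bar>X \<omega>\<bar> ^ 4" using \<open>0 < a\<close> by (intro power_mono) auto
    then show "a ^ 4 \<le> X \<omega> ^ 4" by (simp add: power_even_abs_numeral)
  qed
  then have "measure M {\<omega>\<in>space M. a < \<bar>X \<omega>\<bar>} \<le> measure M {\<omega>\<in>space M. a ^ 4 \<le> X \<omega> ^ 4}"
    by (intro finite_measure_mono) auto
  also have "\<dots> \<le> (\<integral>\<omega>. X \<omega> ^ 4 \<partial>M) / a ^ 4"
    by (rule integral_Markov_inequality_measure[OF int]) (use \<open>0 < a\<close> in auto)
  finally show ?thesis
    using val by simp
qed

definition dyadic_floor :: "real \<Rightarrow> nat \<Rightarrow> real \<Rightarrow> real" where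
  "dyadic_floor n j t = n * \<lfloor>t / n * 2 ^ j\<rfloor> / 2 ^ j"

lemma floor_double_cases: "\<lfloor>2 * x\<rfloor> = 2 * \<lfloor>x\<rfloor> \<or> \<lfloor>2 * x\<rfloor> = 2 * \<lfloor>x\<rfloor> + 1"
  for x :: real
proof (cases "2 * x < 2 * real_of_int \<lfloor>x\<rfloor> + 1")
  case True
  then have "\<lfloor>2 * x\<rfloor> = 2 * \<lfloor>x\<rfloor>" by (subst floor_eq_iff) linarith
  then show ?thesis ..
next
  case False
  then have "\<lfloor>2 * x\<rfloor> = 2 * \<lfloor>x\<rfloor> + 1" by (subst floor_eq_iff) linarith
  then show ?thesis ..
qed

context
  fixes n t :: real
  assumes n: "0 < n" and t: "t \<in> {0..n}"
begin

lemma dyadic_floor_bounds: "0 \<le> dyadic_floor n j t \<and> dyadic_floor n j t \<le> t"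
proof -
  have "real_of_int \<lfloor>t / n * 2 ^ j\<rfloor> \<le> t / n * 2 ^ j" by linarith
  then have "n * \<lfloor>t / n * 2 ^ j\<rfloor> \<le> n * (t / n * 2 ^ j)" using n by (intro mult_left_mono) auto
  then have "n * \<lfloor>t / n * 2 ^ j\<rfloor> \<le> t * 2 ^ j" using n by simp
  then show ?thesis using n t by (auto simp: dyadic_floor_def field_simps)
qed

lemma dyadic_floor_gap: "t - dyadic_floor n j t < n / 2 ^ j"
proof -
  have "t / n * 2 ^ j < \<lfloor>t / n * 2 ^ j\<rfloor> + 1" by linarith
  then have "t * 2 ^ j - n * \<lfloor>t / n * 2 ^ j\<rfloor> < n" using n by (simp add: field_simps)
  moreover have "t - dyadic_floor n j t = (t * 2 ^ j - n * \<lfloor>t / n * 2 ^ j\<rfloor>) / 2 ^ j"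
    by (simp add: dyadic_floor_def field_simps)
  ultimately show ?thesis by (simp add: divide_strict_right_mono)
qed

lemma dyadic_floor_0: "dyadic_floor n 0 t = 0 \<or> dyadic_floor n 0 t = n"
proof -
  have "0 \<le> t / n" "t / n \<le> 1" using n t by auto
  then have "\<lfloor>t / n\<rfloor> = 0 \<or> \<lfloor>t / n\<rfloor> = 1" by linarith
  then show ?thesis by (auto simp: dyadic_floor_def)
qed

lemma dyadic_floor_Suc:
  "dyadic_floor n (Suc j) t = dyadic_floor n j t \<or>
   (\<exists>k < 2 ^ Suc j. dyadic_floor n j t = n * real k / 2 ^ Suc j \<and>
                    dyadic_floor n (Suc j) t = n * (real k + 1) / 2 ^ Suc j)"
proof -
  define f where "f i = \<lfloor>t / n * 2 ^ i\<rfloor>" for i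
  have f_nonneg: "0 \<le> f i" for i using n t by (auto simp: f_def)
  have f_le: "real_of_int (f i) \<le> 2 ^ i" for i
  proof -
    have "t / n * 2 ^ i \<le> 2 ^ i" using n t by (simp add: field_simps)
    then show ?thesis unfolding f_def using of_int_floor_le order_trans by blast
  qed
  have "t / n * 2 ^ Suc j = 2 * (t / n * 2 ^ j)" by simp
  then have "f (Suc j) = 2 * f j \<or> f (Suc j) = 2 * f j + 1"
    unfolding f_def using floor_double_cases by metis
  then show ?thesis
  proof
    assume "f (Suc j) = 2 * f j"
    then show ?thesis unfolding dyadic_floor_def f_def[symmetric] by simp
  next
    assume odd: "f (Suc j) = 2 * f j + 1"
    define k where "k = nat (2 * f j)"
    have k: "real k = 2 * f j" using f_nonneg[of j] by (simp add: k_def)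
    have "real k + 1 \<le> 2 ^ Suc j" using f_le[of "Suc j"] odd k by linarith
    then have "real (k + 1) \<le> real ((2::nat) ^ Suc j)" by simp
    then have "k < 2 ^ Suc j" by (simp only: of_nat_le_iff)
    moreover have "n * f j / 2 ^ j = n * real k / 2 ^ Suc j"
      and "n * f (Suc j) / 2 ^ Suc j = n * (real k + 1) / 2 ^ Suc j"
      using odd k by simp_all
    ultimately show ?thesis unfolding dyadic_floor_def f_def[symmetric] by blast
  qed
qed

end

lemma sum_power_Suc_le:
  fixes q :: real
  assumes "0 \<le> q" "q < 1"
  shows "(\<Sum>j<K. q ^ Suc j) \<le> q / (1 - q)"
proof -
  have "(\<Sum>j<K. q ^ Suc j) = q * (1 - q ^ K) / (1 - q)"
    using assms by (simp add: sum_distrib_left[symmetric] sum_gp_strict)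
  also have "\<dots> \<le> q / (1 - q)"
    using assms by (intro divide_right_mono) (auto simp: mult_left_le)
  finally show ?thesis .
qed

lemma dyadic_chain_bound:
  fixes z :: "real \<Rightarrow> real"
  assumes n: "0 < n" and t: "t \<in> {0..n}" and lam: "0 \<le> lam"
    and top: "\<bar>z n - z 0\<bar> \<le> lam / 4"
    and dyadic: "\<And>j k. j < K \<Longrightarrow> k < 2 ^ Suc j \<Longrightarrow>
        \<bar>z (n * (real k + 1) / 2 ^ Suc j) - z (n * real k / 2 ^ Suc j)\<bar> \<le> lam * (9/10) ^ Suc j / 36"
    and fine: "\<bar>z t - z (dyadic_floor n K t)\<bar> \<le> lam / 4"
  shows "\<bar>z t - z 0\<bar> \<le> lam"
proof -
  let ?g = "\<lambda>j. dyadic_floor n j t"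
  have start: "\<bar>z (?g 0) - z 0\<bar> \<le> lam / 4"
    using dyadic_floor_0[OF n t] top lam by auto
  have step: "\<bar>z (?g (Suc j)) - z (?g j)\<bar> \<le> lam * (9/10) ^ Suc j / 36" if "j < K" for j
    using dyadic_floor_Suc[OF n t, of j] dyadic[OF that] lam by auto
  have "\<bar>\<Sum>j<K. z (?g (Suc j)) - z (?g j)\<bar> \<le> (\<Sum>j<K. lam * (9/10) ^ Suc j / 36)"
    by (rule order.trans[OF sum_abs]) (intro sum_mono step, simp)
  also have "\<dots> = lam / 36 * (\<Sum>j<K. (9/10) ^ Suc j)"
    by (simp add: sum_distrib_left)
  also have "\<dots> \<le> lam / 36 * 9"
    using sum_power_Suc_le[of "9/10" K] lam by (intro mult_left_mono) auto
  finally have chain: "\<bar>\<Sum>j<K. z (?g (Suc j)) - z (?g j)\<bar> \<le> lam / 4" by simp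
  have "z t - z 0 = (z t - z (?g K)) + (\<Sum>j<K. z (?g (Suc j)) - z (?g j)) + (z (?g 0) - z 0)"
    using sum_lessThan_telescope[of "\<lambda>j. z (?g j)" K] by simp
  then show ?thesis
    using start chain fine lam by linarith
qed

lemma dyadic_point_bounds:
  assumes "0 < n" "k < 2 ^ j"
  shows "0 \<le> n * real k / 2 ^ j" "n * real k / 2 ^ j \<le> n * (real k + 1) / 2 ^ j"
    "n * (real k + 1) / 2 ^ j \<le> n"
proof -
  have "real (k + 1) \<le> real ((2::nat) ^ j)"
    using assms(2) by (simp only: of_nat_le_iff)
  then have "n * (real k + 1) \<le> n * 2 ^ j"
    using assms(1) by (intro mult_left_mono) auto
  then show "0 \<le> n * real k / 2 ^ j" "n * real k / 2 ^ j \<le> n * (real k + 1) / 2 ^ j"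
    "n * (real k + 1) / 2 ^ j \<le> n"
    using assms(1) by (auto simp: field_simps)
qed

lemma dyadic_increment_bound_arith:
  fixes lam n :: real
  assumes "0 < lam"
  shows "3 * (n / 2 ^ i) ^ 2 / (lam * (9/10) ^ i / 36) ^ 4
       = 3 * 36 ^ 4 * n ^ 2 / lam ^ 4 * (10000/26244) ^ i"
proof -
  have "((2::real) ^ i) ^ 2 = 4 ^ i"
    by (simp add: power2_eq_square flip: power_mult_distrib)
  then have sq: "(n / 2 ^ i) ^ 2 = n ^ 2 / 4 ^ i"
    by (simp add: power_divide)
  have "((9/10::real) ^ i) ^ 4 = ((9/10) ^ 4) ^ i"
    by (metis power_mult mult.commute)
  also have "(9/10::real) ^ 4 = 6561/10000"
    by (simp add: power_divide)
  finally have "((9/10::real) ^ i) ^ 4 = (6561/10000) ^ i" .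
  then have quartic: "(lam * (9/10) ^ i / 36) ^ 4 = lam ^ 4 / 36 ^ 4 * (6561/10000) ^ i"
    by (simp only: power_mult_distrib power_divide) simp
  have "(4::real) ^ i * (6561/10000) ^ i = (26244/10000) ^ i"
    by (simp flip: power_mult_distrib)
  then show ?thesis
    unfolding sq quartic using assms by (simp add: field_simps power_divide flip: power_mult_distrib)
qed

locale gaussian_increments = prob_space M for M :: "'a measure" +
  fixes Z :: "real \<Rightarrow> 'a \<Rightarrow> real" and L :: real
  assumes measurable_Z: "\<And>x. x \<in> {0..L} \<Longrightarrow> Z x \<in> borel_measurable M"
    and distributed_increment: "\<And>s t. 0 \<le> s \<Longrightarrow> s < t \<Longrightarrow> t \<le> L \<Longrightarrow>
        distributed M lborel (\<lambda>\<omega>. Z t \<omega> - Z s \<omega>) (\<lambda>y. ennreal (normal_density 0 (sqrt (t - s)) y))"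
begin

definition increment_event :: "real \<Rightarrow> real \<Rightarrow> real \<Rightarrow> 'a set" where
  "increment_event s t \<theta> = {\<omega>\<in>space M. \<theta> < \<bar>Z t \<omega> - Z s \<omega>\<bar>}"

lemma increment_event_sets:
  assumes "s \<in> {0..L}" "t \<in> {0..L}"
  shows "increment_event s t \<theta> \<in> sets M"
proof -
  have [measurable]: "Z s \<in> borel_measurable M" "Z t \<in> borel_measurable M"
    using assms measurable_Z by auto
  show ?thesis unfolding increment_event_def by measurable
qed

lemma increment_event_measure:
  assumes "0 \<le> s" "s \<le> t" "t \<le> L" "0 < \<theta>"
  shows "measure M (increment_event s t \<theta>) \<le> 3 * (t - s) ^ 2 / \<theta> ^ 4"
proof (cases "s = t")
  case False
  then show ?thesis
    using assms unfolding increment_event_def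
    by (intro gaussian_tail_fourth_moment[OF prob_space_axioms _ _ distributed_increment]) auto
qed (use assms in \<open>simp add: increment_event_def\<close>)

lemma dyadic_increments_tail:
  assumes n: "0 < n" "n \<le> L" and lam: "0 < lam"
  shows "measure M (\<Union>j<K. \<Union>k<2 ^ Suc j.
           increment_event (n * real k / 2 ^ Suc j) (n * (real k + 1) / 2 ^ Suc j) (lam * (9/10) ^ Suc j / 36))
         \<le> 12 * 36 ^ 4 * n ^ 2 / lam ^ 4"
    (is "measure M (\<Union>j<K. \<Union>k<2 ^ Suc j. ?E j k) \<le> _")
proof -
  let ?c = "3 * 36 ^ 4 * n ^ 2 / lam ^ 4"
  have sets: "?E j k \<in> sets M" if "k < 2 ^ Suc j" for j k
    using dyadic_point_bounds[OF n(1) that] n by (intro increment_event_sets) auto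
  have single: "measure M (?E j k) \<le> ?c * (10000/26244) ^ Suc j" if "k < 2 ^ Suc j" for j k
  proof -
    have "measure M (?E j k) \<le> 3 * (n * (real k + 1) / 2 ^ Suc j - n * real k / 2 ^ Suc j) ^ 2
        / (lam * (9/10) ^ Suc j / 36) ^ 4"
      using dyadic_point_bounds[OF n(1) that] n lam by (intro increment_event_measure) auto
    also have "\<dots> = 3 * (n / 2 ^ Suc j) ^ 2 / (lam * (9/10) ^ Suc j / 36) ^ 4"
      by (simp add: diff_divide_distrib[symmetric] algebra_simps)
    also have "\<dots> = ?c * (10000/26244) ^ Suc j"
      by (rule dyadic_increment_bound_arith[OF lam])
    finally show ?thesis .
  qed
  have level: "measure M (\<Union>k<2 ^ Suc j. ?E j k) \<le> ?c * (10000/13122) ^ Suc j" for j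
  proof -
    have "measure M (\<Union>k<2 ^ Suc j. ?E j k) \<le> (\<Sum>k<2 ^ Suc j. measure M (?E j k))"
      using sets by (intro measure_UNION_le) auto
    also have "\<dots> \<le> (\<Sum>k<(2::nat) ^ Suc j. ?c * (10000/26244) ^ Suc j)"
      by (intro sum_mono single) auto
    also have "\<dots> = ?c * ((10000/26244) ^ Suc j * 2 ^ Suc j)"
      by simp
    also have "(10000/26244::real) ^ Suc j * 2 ^ Suc j = (10000/13122) ^ Suc j"
      by (simp flip: power_mult_distrib)
    finally show ?thesis .
  qed
  have "measure M (\<Union>j<K. \<Union>k<2 ^ Suc j. ?E j k) \<le> (\<Sum>j<K. measure M (\<Union>k<2 ^ Suc j. ?E j k))"
    using sets by (intro measure_UNION_le) auto
  also have "\<dots> \<le> ?c * (\<Sum>j<K. (10000/13122) ^ Suc j)"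
    unfolding sum_distrib_left by (intro sum_mono level)
  also have "\<dots> \<le> ?c * 4"
    using sum_power_Suc_le[of "10000/13122" K] by (intro mult_left_mono) auto
  finally show ?thesis by simp
qed

text \<open>
  The point \<open>t\<close> is reached from \<open>0\<close> through its dyadic approximations; the thresholds
  \<open>\<lambda> (9/10)\<^sup>j / 36\<close> of the \<open>2\<^sup>j\<close> increments at level \<open>j\<close> add up to \<open>\<lambda>/4\<close>, while their
  fourth-moment tail bounds decay geometrically in \<open>j\<close>, so the bound does not depend on the depth.
\<close>

lemma max_increment_tail:
  assumes n: "0 < n" "n \<le> L" and lam: "0 < lam" and P: "finite P" "P \<subseteq> {0..n}"
  shows "measure M {\<omega>\<in>space M. \<exists>t\<in>P. lam < \<bar>Z t \<omega> - Z 0 \<omega>\<bar>}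
         \<le> 13 * 36 ^ 4 * (n ^ 2 + real (card P)) / lam ^ 4"
proof -
  obtain K :: nat where K: "n < 2 ^ K"
    using real_arch_pow[of 2 n] by auto
  let ?top = "increment_event 0 n (lam / 4)"
  let ?dyadic = "\<Union>j<K. \<Union>k<2 ^ Suc j.
     increment_event (n * real k / 2 ^ Suc j) (n * (real k + 1) / 2 ^ Suc j) (lam * (9/10) ^ Suc j / 36)"
  let ?fine = "\<Union>t\<in>P. increment_event (dyadic_floor n K t) t (lam / 4)"
  have floor: "0 \<le> dyadic_floor n K t" "dyadic_floor n K t \<le> t" "t - dyadic_floor n K t \<le> 1"
    if "t \<in> P" for t
  proof -
    have t: "t \<in> {0..n}" using that P by auto
    show "0 \<le> dyadic_floor n K t" "dyadic_floor n K t \<le> t"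
      using dyadic_floor_bounds[OF n(1) t] by auto
    have "n / 2 ^ K < 1" using K by simp
    then show "t - dyadic_floor n K t \<le> 1"
      using dyadic_floor_gap[OF n(1) t, of K] by linarith
  qed
  have in_range: "t \<in> {0..L}" "dyadic_floor n K t \<in> {0..L}" if "t \<in> P" for t
    using floor[OF that] that P n by auto
  have top_sets: "?top \<in> sets M"
    using n by (intro increment_event_sets) auto
  have dyadic_sets: "?dyadic \<in> sets M"
  proof (intro sets.finite_UN finite_lessThan ballI increment_event_sets)
    fix j k :: nat assume "k \<in> {..<2 ^ Suc j}"
    with dyadic_point_bounds[OF n(1), of k "Suc j"] n
    show "n * real k / 2 ^ Suc j \<in> {0..L}" "n * (real k + 1) / 2 ^ Suc j \<in> {0..L}"
      by auto
  qed
  have fine_sets: "?fine \<in> sets M"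
    using P in_range by (intro sets.finite_UN increment_event_sets) auto
  have "{\<omega>\<in>space M. \<exists>t\<in>P. lam < \<bar>Z t \<omega> - Z 0 \<omega>\<bar>} \<subseteq> ?top \<union> ?dyadic \<union> ?fine"
  proof (rule subsetI, rule ccontr)
    fix \<omega> assume "\<omega> \<in> {\<omega>\<in>space M. \<exists>t\<in>P. lam < \<bar>Z t \<omega> - Z 0 \<omega>\<bar>}" and out: "\<omega> \<notin> ?top \<union> ?dyadic \<union> ?fine"
    then obtain t where \<omega>: "\<omega> \<in> space M" and t: "t \<in> P" and big: "lam < \<bar>Z t \<omega> - Z 0 \<omega>\<bar>"
      by blast
    have "\<bar>Z t \<omega> - Z 0 \<omega>\<bar> \<le> lam"
    proof (rule dyadic_chain_bound[where z = "\<lambda>x. Z x \<omega>" and K = K, OF n(1)])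
      show "t \<in> {0..n}" "0 \<le> lam" using t P lam by auto
      show "\<bar>Z n \<omega> - Z 0 \<omega>\<bar> \<le> lam / 4"
        using out \<omega> unfolding increment_event_def by auto
      show "\<bar>Z t \<omega> - Z (dyadic_floor n K t) \<omega>\<bar> \<le> lam / 4"
        using out \<omega> t unfolding increment_event_def by auto
      fix j k :: nat assume "j < K" "k < 2 ^ Suc j"
      then have "\<omega> \<notin> increment_event (n * real k / 2 ^ Suc j) (n * (real k + 1) / 2 ^ Suc j)
          (lam * (9/10) ^ Suc j / 36)"
        using out by blast
      then show "\<bar>Z (n * (real k + 1) / 2 ^ Suc j) \<omega> - Z (n * real k / 2 ^ Suc j) \<omega>\<bar>
          \<le> lam * (9/10) ^ Suc j / 36"
        using \<omega> unfolding increment_event_def by auto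
    qed
    with big show False by linarith
  qed
  then have "measure M {\<omega>\<in>space M. \<exists>t\<in>P. lam < \<bar>Z t \<omega> - Z 0 \<omega>\<bar>} \<le> measure M (?top \<union> ?dyadic \<union> ?fine)"
    using top_sets dyadic_sets fine_sets by (intro finite_measure_mono) auto
  also have "\<dots> \<le> measure M ?top + measure M ?dyadic + measure M ?fine"
    using measure_Un_le[OF sets.Un[OF top_sets dyadic_sets] fine_sets] measure_Un_le[OF top_sets dyadic_sets]
    by linarith
  also have "\<dots> \<le> 768 * n ^ 2 / lam ^ 4 + 12 * 36 ^ 4 * n ^ 2 / lam ^ 4 + real (card P) * (768 / lam ^ 4)"
  proof (intro add_mono)
    have "measure M ?top \<le> 3 * (n - 0) ^ 2 / (lam / 4) ^ 4"
      using n lam by (intro increment_event_measure) auto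
    then show "measure M ?top \<le> 768 * n ^ 2 / lam ^ 4"
      by (simp add: field_simps)
    show "measure M ?dyadic \<le> 12 * 36 ^ 4 * n ^ 2 / lam ^ 4"
      by (rule dyadic_increments_tail[OF n lam])
    have "measure M (increment_event (dyadic_floor n K t) t (lam / 4)) \<le> 768 / lam ^ 4" if "t \<in> P" for t
    proof -
      have "measure M (increment_event (dyadic_floor n K t) t (lam / 4))
          \<le> 3 * (t - dyadic_floor n K t) ^ 2 / (lam / 4) ^ 4"
        using floor[OF that] that P n lam by (intro increment_event_measure) auto
      also have "\<dots> \<le> 3 * 1 / (lam / 4) ^ 4"
        using floor[OF that] lam by (intro divide_right_mono mult_left_mono) (auto simp: power_le_one)
      finally show ?thesis by (simp add: field_simps)
    qed
    then have "measure M ?fine \<le> (\<Sum>t\<in>P. 768 / lam ^ 4)"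
      using P in_range by (intro order.trans[OF measure_UNION_le] sum_mono increment_event_sets) auto
    then show "measure M ?fine \<le> real (card P) * (768 / lam ^ 4)"
      by simp
  qed
  also have "\<dots> \<le> 13 * 36 ^ 4 * (n ^ 2 + real (card P)) / lam ^ 4"
    using lam by (simp add: field_simps)
  finally show ?thesis .
qed

end

lemma std_wiener_on_gaussian_increments:
  assumes "prob_space M" "std_wiener_on M L W"
  shows "gaussian_increments M W L"
  using assms unfolding std_wiener_on_def gaussian_increments_def gaussian_increments_axioms_def
  by auto

lemma std_wiener_max_tail:
  assumes M: "prob_space M" and W: "std_wiener_on M L W"
    and n: "0 < n" "n \<le> L" and lam: "0 < lam" and P: "finite P" "P \<subseteq> {0..n}"
  shows "\<exists>A\<in>sets M. {\<omega>\<in>space M. \<exists>t\<in>P. lam < \<bar>W t \<omega>\<bar>} \<subseteq> A \<and>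
           measure M A \<le> 13 * 36 ^ 4 * (n ^ 2 + real (card P)) / lam ^ 4"
proof -
  interpret gaussian_increments M W L
    by (rule std_wiener_on_gaussian_increments[OF M W])
  have "AE \<omega> in M. W 0 \<omega> = 0"
    using W unfolding std_wiener_on_def by (auto elim: AE_mp)
  then obtain N where N: "{\<omega>\<in>space M. W 0 \<omega> \<noteq> 0} \<subseteq> N" "emeasure M N = 0" "N \<in> sets M"
    by (rule AE_E)
  define B where "B = {\<omega>\<in>space M. \<exists>t\<in>P. lam < \<bar>W t \<omega> - W 0 \<omega>\<bar>}"
  have B_sets: "B \<in> sets M"
  proof -
    have "B = (\<Union>t\<in>P. increment_event 0 t lam)"
      unfolding B_def increment_event_def by auto
    also have "\<dots> \<in> sets M"
      using P n by (intro sets.finite_UN increment_event_sets) auto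
    finally show ?thesis .
  qed
  have "measure M (B \<union> N) \<le> measure M B + measure M N"
    using measure_Un_le[OF B_sets N(3)] .
  also have "\<dots> \<le> 13 * 36 ^ 4 * (n ^ 2 + real (card P)) / lam ^ 4"
    using max_increment_tail[OF n lam P] N(2) by (simp add: B_def measure_def)
  finally have "measure M (B \<union> N) \<le> 13 * 36 ^ 4 * (n ^ 2 + real (card P)) / lam ^ 4" .
  moreover have "{\<omega>\<in>space M. \<exists>t\<in>P. lam < \<bar>W t \<omega>\<bar>} \<subseteq> B \<union> N"
    using N(1) unfolding B_def by auto
  ultimately show ?thesis
    using B_sets N(3) by blast
qed

section \<open>Stochastic boundedness\<close>

definition bounded_in_prob :: "'a measure \<Rightarrow> (nat \<Rightarrow> 'a \<Rightarrow> real) \<Rightarrow> bool" where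
  "bounded_in_prob M N \<longleftrightarrow> (\<forall>\<epsilon>>0. \<exists>C. \<forall>\<^sub>F T in sequentially.
     \<exists>A\<in>sets M. {\<omega>\<in>space M. C < N T \<omega>} \<subseteq> A \<and> measure M A < \<epsilon>)"

lemma bounded_in_prob_mono:
  assumes "bounded_in_prob M N'" and le: "\<forall>\<^sub>F T in sequentially. \<forall>\<omega>\<in>space M. N T \<omega> \<le> N' T \<omega>"
  shows "bounded_in_prob M N"
  unfolding bounded_in_prob_def
proof (intro allI impI)
  fix \<epsilon> :: real assume "0 < \<epsilon>"
  then obtain C where "\<forall>\<^sub>F T in sequentially. \<exists>A\<in>sets M. {\<omega>\<in>space M. C < N' T \<omega>} \<subseteq> A \<and> measure M A < \<epsilon>"
    using assms(1) unfolding bounded_in_prob_def by blast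
  with le have "\<forall>\<^sub>F T in sequentially. \<exists>A\<in>sets M. {\<omega>\<in>space M. C < N T \<omega>} \<subseteq> A \<and> measure M A < \<epsilon>"
  proof eventually_elim
    case (elim T)
    then have "{\<omega>\<in>space M. C < N T \<omega>} \<subseteq> {\<omega>\<in>space M. C < N' T \<omega>}"
      by (auto intro: order.strict_trans2)
    with elim(2) show ?case
      by blast
  qed
  then show "\<exists>C. \<forall>\<^sub>F T in sequentially. \<exists>A\<in>sets M. {\<omega>\<in>space M. C < N T \<omega>} \<subseteq> A \<and> measure M A < \<epsilon>" ..
qed

lemma bounded_in_prob_add:
  assumes "bounded_in_prob M N1" "bounded_in_prob M N2"
  shows "bounded_in_prob M (\<lambda>T \<omega>. N1 T \<omega> + N2 T \<omega>)"
  unfolding bounded_in_prob_def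
proof (intro allI impI)
  fix \<epsilon> :: real assume "0 < \<epsilon>"
  then obtain C1 C2 where
    "\<forall>\<^sub>F T in sequentially. \<exists>A\<in>sets M. {\<omega>\<in>space M. C1 < N1 T \<omega>} \<subseteq> A \<and> measure M A < \<epsilon> / 2"
    "\<forall>\<^sub>F T in sequentially. \<exists>A\<in>sets M. {\<omega>\<in>space M. C2 < N2 T \<omega>} \<subseteq> A \<and> measure M A < \<epsilon> / 2"
    using assms unfolding bounded_in_prob_def by (meson half_gt_zero)
  then have "\<forall>\<^sub>F T in sequentially.
      \<exists>A\<in>sets M. {\<omega>\<in>space M. C1 + C2 < N1 T \<omega> + N2 T \<omega>} \<subseteq> A \<and> measure M A < \<epsilon>"
  proof eventually_elim
    case (elim T)
    then obtain A1 A2 where A: "A1 \<in> sets M" "{\<omega>\<in>space M. C1 < N1 T \<omega>} \<subseteq> A1" "measure M A1 < \<epsilon> / 2"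
      "A2 \<in> sets M" "{\<omega>\<in>space M. C2 < N2 T \<omega>} \<subseteq> A2" "measure M A2 < \<epsilon> / 2"
      by blast
    have "{\<omega>\<in>space M. C1 + C2 < N1 T \<omega> + N2 T \<omega>}
        \<subseteq> {\<omega>\<in>space M. C1 < N1 T \<omega>} \<union> {\<omega>\<in>space M. C2 < N2 T \<omega>}"
      by auto
    with A(2,5) have "{\<omega>\<in>space M. C1 + C2 < N1 T \<omega> + N2 T \<omega>} \<subseteq> A1 \<union> A2"
      by blast
    moreover have "measure M (A1 \<union> A2) < \<epsilon>"
      using measure_Un_le[OF A(1,4)] A(3,6) by linarith
    ultimately show ?case
      using A(1,4) by blast
  qed
  then show "\<exists>C. \<forall>\<^sub>F T in sequentially.
      \<exists>A\<in>sets M. {\<omega>\<in>space M. C < N1 T \<omega> + N2 T \<omega>} \<subseteq> A \<and> measure M A < \<epsilon>" ..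
qed

lemma bounded_in_prob_cmult:
  assumes "bounded_in_prob M N" "0 \<le> c"
  shows "bounded_in_prob M (\<lambda>T \<omega>. c * N T \<omega>)"
  unfolding bounded_in_prob_def
proof (intro allI impI)
  fix \<epsilon> :: real assume "0 < \<epsilon>"
  then obtain C where "\<forall>\<^sub>F T in sequentially. \<exists>A\<in>sets M. {\<omega>\<in>space M. C < N T \<omega>} \<subseteq> A \<and> measure M A < \<epsilon>"
    using assms(1) unfolding bounded_in_prob_def by blast
  moreover have "{\<omega>\<in>space M. max 0 (c * C) < c * N T \<omega>} \<subseteq> {\<omega>\<in>space M. C < N T \<omega>}" for T
  proof safe
    fix \<omega> assume big: "max 0 (c * C) < c * N T \<omega>"
    then have "c \<noteq> 0" by auto
    with assms(2) big show "C < N T \<omega>"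
      by (simp add: mult_less_cancel_left_pos)
  qed
  ultimately have "\<forall>\<^sub>F T in sequentially.
      \<exists>A\<in>sets M. {\<omega>\<in>space M. max 0 (c * C) < c * N T \<omega>} \<subseteq> A \<and> measure M A < \<epsilon>"
    by (elim eventually_mono) (meson order.trans)
  then show "\<exists>C. \<forall>\<^sub>F T in sequentially.
      \<exists>A\<in>sets M. {\<omega>\<in>space M. C < c * N T \<omega>} \<subseteq> A \<and> measure M A < \<epsilon>" ..
qed

lemma bounded_in_prob_fourth_moment_tail:
  assumes "\<And>lam. 0 < lam \<Longrightarrow> \<forall>\<^sub>F T in sequentially.
      \<exists>A\<in>sets M. {\<omega>\<in>space M. lam < N T \<omega>} \<subseteq> A \<and> measure M A \<le> K / lam ^ 4"
  shows "bounded_in_prob M N"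
  unfolding bounded_in_prob_def
proof (intro allI impI)
  fix \<epsilon> :: real assume \<epsilon>: "0 < \<epsilon>"
  define lam where "lam = (\<bar>K\<bar> + 1) / \<epsilon> + 1"
  have "\<epsilon> * lam = \<bar>K\<bar> + 1 + \<epsilon>"
    using \<epsilon> by (simp add: lam_def field_simps)
  then have lam: "1 \<le> lam" "\<bar>K\<bar> < \<epsilon> * lam"
    using \<epsilon> by (auto simp: lam_def)
  have "K / lam ^ 4 \<le> \<bar>K\<bar> / lam"
    using lam power_increasing[of 1 4 lam] by (intro frac_le) auto
  also have "\<dots> < \<epsilon>"
    using lam by (simp add: divide_less_eq mult.commute)
  finally have "K / lam ^ 4 < \<epsilon>" .
  with assms[of lam] lam(1)
  have "\<forall>\<^sub>F T in sequentially. \<exists>A\<in>sets M. {\<omega>\<in>space M. lam < N T \<omega>} \<subseteq> A \<and> measure M A < \<epsilon>"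
    by (auto elim!: eventually_mono)
  then show "\<exists>C. \<forall>\<^sub>F T in sequentially. \<exists>A\<in>sets M. {\<omega>\<in>space M. C < N T \<omega>} \<subseteq> A \<and> measure M A < \<epsilon>" ..
qed

lemma bounded_in_prob_Max_OP1_sup:
  assumes OP: "OP1_sup M I F" and fin: "\<And>T. finite (Q T)" and sub: "\<And>T. 2 \<le> T \<Longrightarrow> Q T \<subseteq> I T"
  shows "bounded_in_prob M (\<lambda>T \<omega>. Max (insert 0 ((\<lambda>x. F T x \<omega>) ` Q T)))"
  unfolding bounded_in_prob_def
proof (intro allI impI)
  fix \<epsilon> :: real assume "0 < \<epsilon>"
  then obtain C T0 where C: "\<And>T. T0 \<le> T \<Longrightarrow> \<exists>A\<in>sets M. {\<omega>\<in>space M. \<exists>x\<in>I T. C < F T x \<omega>} \<subseteq> A \<and> measure M A < \<epsilon>"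
    using OP unfolding OP1_sup_def by blast
  have "{\<omega>\<in>space M. max C 0 < Max (insert 0 ((\<lambda>x. F T x \<omega>) ` Q T))} \<subseteq> {\<omega>\<in>space M. \<exists>x\<in>I T. C < F T x \<omega>}"
    if "2 \<le> T" for T
  proof safe
    fix \<omega> assume "max C 0 < Max (insert 0 ((\<lambda>x. F T x \<omega>) ` Q T))"
    then obtain y where "y \<in> insert 0 ((\<lambda>x. F T x \<omega>) ` Q T)" "max C 0 < y"
      by (subst (asm) Max_gr_iff) (auto simp: fin)
    then obtain x where "x \<in> Q T" "max C 0 < F T x \<omega>"
      by auto
    then show "\<exists>x\<in>I T. C < F T x \<omega>"
      using sub[OF that] by force
  qed
  then have "\<forall>\<^sub>F T in sequentially. \<exists>A\<in>sets M.
      {\<omega>\<in>space M. max C 0 < Max (insert 0 ((\<lambda>x. F T x \<omega>) ` Q T))} \<subseteq> A \<and> measure M A < \<epsilon>"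
    unfolding eventually_sequentially using C by (intro exI[of _ "max T0 2"]) (meson max.boundedE order.trans)
  then show "\<exists>C. \<forall>\<^sub>F T in sequentially. \<exists>A\<in>sets M.
      {\<omega>\<in>space M. C < Max (insert 0 ((\<lambda>x. F T x \<omega>) ` Q T))} \<subseteq> A \<and> measure M A < \<epsilon>" ..
qed

lemma diverges_in_prob_iff_filterlim:
  assumes "prob_space M" and sets: "\<And>T C. {\<omega>\<in>space M. Y T \<omega> \<le> C} \<in> sets M"
    and bounded: "bounded_in_prob M N"
    and close: "\<forall>\<^sub>F T in sequentially. \<forall>\<omega>\<in>space M. \<bar>Y T \<omega> - g T\<bar> \<le> N T \<omega>"
  shows "diverges_in_prob M Y \<longleftrightarrow> filterlim g at_top sequentially"
proof
  interpret prob_space M by fact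
  assume div: "diverges_in_prob M Y"
  show "filterlim g at_top sequentially"
    unfolding filterlim_at_top
  proof
    fix Z :: real
    obtain C where "\<forall>\<^sub>F T in sequentially. \<exists>A\<in>sets M. {\<omega>\<in>space M. C < N T \<omega>} \<subseteq> A \<and> measure M A < 1/2"
      using bounded unfolding bounded_in_prob_def by (meson zero_less_divide_1_iff zero_less_numeral)
    moreover have "\<forall>\<^sub>F T in sequentially. measure M {\<omega>\<in>space M. Y T \<omega> \<le> Z + C} < 1/2"
      using div unfolding diverges_in_prob_def by (intro order_tendstoD(2)[of _ 0]) auto
    ultimately show "\<forall>\<^sub>F T in sequentially. Z \<le> g T"
      using close
    proof eventually_elim
      case (elim T)
      then obtain A where A: "A \<in> sets M" "{\<omega>\<in>space M. C < N T \<omega>} \<subseteq> A" "measure M A < 1/2"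
        by blast
      show ?case
      proof (rule ccontr)
        assume "\<not> Z \<le> g T"
        have "space M - A \<subseteq> {\<omega>\<in>space M. Y T \<omega> \<le> Z + C}"
        proof
          fix \<omega> assume \<omega>: "\<omega> \<in> space M - A"
          then have "\<not> C < N T \<omega>" using A(2) by blast
          moreover have "\<bar>Y T \<omega> - g T\<bar> \<le> N T \<omega>" using elim(3) \<omega> by blast
          ultimately show "\<omega> \<in> {\<omega>\<in>space M. Y T \<omega> \<le> Z + C}"
            using \<open>\<not> Z \<le> g T\<close> \<omega> by auto
        qed
        then have "measure M (space M - A) \<le> measure M {\<omega>\<in>space M. Y T \<omega> \<le> Z + C}"
          using sets by (intro finite_measure_mono) auto
        then show False
          using prob_compl[OF A(1)] A(3) elim(2) by linarith
      qed
    qed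
  qed
next
  interpret prob_space M by fact
  assume lim: "filterlim g at_top sequentially"
  show "diverges_in_prob M Y"
    unfolding diverges_in_prob_def
  proof (intro allI order_tendstoI)
    fix C r :: real
    show "\<forall>\<^sub>F T in sequentially. r < measure M {\<omega>\<in>space M. Y T \<omega> \<le> C}" if "r < 0"
      using that by (simp add: order.strict_trans2)
    assume "0 < r"
    then obtain C' where "\<forall>\<^sub>F T in sequentially. \<exists>A\<in>sets M. {\<omega>\<in>space M. C' < N T \<omega>} \<subseteq> A \<and> measure M A < r"
      using bounded unfolding bounded_in_prob_def by blast
    moreover have "\<forall>\<^sub>F T in sequentially. C + C' + 1 \<le> g T"
      using lim unfolding filterlim_at_top by blast
    ultimately show "\<forall>\<^sub>F T in sequentially. measure M {\<omega>\<in>space M. Y T \<omega> \<le> C} < r"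
      using close
    proof eventually_elim
      case (elim T)
      then obtain A where A: "A \<in> sets M" "{\<omega>\<in>space M. C' < N T \<omega>} \<subseteq> A" "measure M A < r"
        by blast
      have "{\<omega>\<in>space M. Y T \<omega> \<le> C} \<subseteq> A"
      proof
        fix \<omega> assume \<omega>: "\<omega> \<in> {\<omega>\<in>space M. Y T \<omega> \<le> C}"
        then have "\<bar>Y T \<omega> - g T\<bar> \<le> N T \<omega>" using elim(3) by blast
        with \<omega> elim(2) have "C' < N T \<omega>" by auto
        with \<omega> A(2) show "\<omega> \<in> A" by blast
      qed
      then show ?case
        using A(1,3) by (meson finite_measure_mono order.strict_trans1)
    qed
  qed
qed

section \<open>Maxima of Wiener processes\<close>

text \<open>\<open>T/2\<close> is a node because Assumption (A) is split there; for odd \<open>T\<close> it is not an integer.\<close>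

definition half_grid :: "nat \<Rightarrow> real set" where "half_grid T = insert (real T / 2) (real ` {..T div 2})"

definition grid_max :: "(nat \<Rightarrow> real \<Rightarrow> 'a \<Rightarrow> real) \<Rightarrow> nat \<Rightarrow> 'a \<Rightarrow> real" where
  "grid_max W T \<omega> = Max (insert 0 ((\<lambda>t. \<bar>W T t \<omega>\<bar>) ` half_grid T))"

lemma finite_half_grid: "finite (half_grid T)" unfolding half_grid_def by auto

lemma half_grid_subset: "half_grid T \<subseteq> {0..real T / 2}"
proof -
  have "real k \<le> real T / 2" if "k \<le> T div 2" for k
  proof -
    have "real k \<le> real (T div 2)" using that by simp
    also have "real (T div 2) \<le> real T / 2" by linarith
    finally show ?thesis .
  qed
  then show ?thesis unfolding half_grid_def by auto
qed

lemma card_half_grid: "real (card (half_grid T)) \<le> real T / 2 + 2"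
proof -
  have "card (half_grid T) \<le> Suc (card (real ` {..T div 2}))" unfolding half_grid_def by (simp add: card_insert_if)
  also have "card (real ` {..T div 2}) \<le> card {..T div 2}" by (rule card_image_le) auto
  finally have "card (half_grid T) \<le> T div 2 + 2" by simp
  then have "real (card (half_grid T)) \<le> real (T div 2) + 2" by linarith
  also have "real (T div 2) \<le> real T / 2" by linarith
  finally show ?thesis by simp
qed

lemma grid_max_ge: "t \<in> half_grid T \<Longrightarrow> \<bar>W T t \<omega>\<bar> \<le> grid_max W T \<omega>"
  unfolding grid_max_def by (rule Max_ge) (auto simp: finite_half_grid)

lemma grid_max_nonneg: "0 \<le> grid_max W T \<omega>"
  unfolding grid_max_def by (rule Max_ge) (auto simp: finite_half_grid)

lemma grid_tail_bound_arith:
  assumes lam: "0 < lam" and T: "2 \<le> T"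
  shows "13 * 36 ^ 4 * ((real T / 2) ^ 2 + real (card (half_grid T))) / (lam * sqrt (real T)) ^ 4
       \<le> 13 * 36 ^ 4 / lam ^ 4"
proof -
  have "0 \<le> (real T - 2) * (3 * real T + 4)"
    using T by (intro mult_nonneg_nonneg) auto
  then have "(real T / 2) ^ 2 + real T / 2 + 2 \<le> (real T) ^ 2"
    by (simp add: algebra_simps power2_eq_square)
  then have le: "(real T / 2) ^ 2 + real (card (half_grid T)) \<le> (real T) ^ 2"
    using card_half_grid[of T] by linarith
  have quartic: "(lam * sqrt (real T)) ^ 4 = lam ^ 4 * (real T) ^ 2"
    by (simp add: power_mult_distrib power4_eq_xxxx power2_eq_square)
  have "13 * 36 ^ 4 * ((real T / 2) ^ 2 + real (card (half_grid T))) / (lam * sqrt (real T)) ^ 4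
      \<le> 13 * 36 ^ 4 * (real T) ^ 2 / (lam ^ 4 * (real T) ^ 2)"
    unfolding quartic using lam T by (intro divide_right_mono mult_left_mono le) auto
  also have "\<dots> = 13 * 36 ^ 4 / lam ^ 4"
    using T by simp
  finally show ?thesis .
qed

lemma bounded_in_prob_grid_max:
  assumes M: "prob_space M" and W: "\<And>T. std_wiener_on M (real T / 2) (W T)"
  shows "bounded_in_prob M (\<lambda>T \<omega>. grid_max W T \<omega> / sqrt (real T))"
proof (rule bounded_in_prob_fourth_moment_tail[where K = "13 * 36^4"])
  fix lam :: real assume lam: "lam > 0"
  show "\<forall>\<^sub>F T in sequentially. \<exists>A\<in>sets M. {\<omega>\<in>space M. lam < grid_max W T \<omega> / sqrt (real T)} \<subseteq> A \<and>
          measure M A \<le> 13 * 36^4 / lam^4"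
    unfolding eventually_sequentially
  proof (intro exI[of _ 2] allI impI)
    fix T :: nat assume T: "2 \<le> T"
    have sT: "sqrt (real T) > 0" using T by simp
    have l': "lam * sqrt (real T) > 0" using lam sT by simp
    obtain A where A: "A \<in> sets M" "{\<omega>\<in>space M. \<exists>t\<in>half_grid T. lam * sqrt (real T) < \<bar>W T t \<omega>\<bar>} \<subseteq> A"
      "measure M A \<le> 13 * 36^4 * ((real T / 2)^2 + real (card (half_grid T))) / (lam * sqrt (real T))^4"
      using std_wiener_max_tail[OF M W[of T], where n="real T / 2" and lam="lam * sqrt (real T)" and P="half_grid T"] T l' finite_half_grid half_grid_subset by auto
    have "{\<omega>\<in>space M. lam < grid_max W T \<omega> / sqrt (real T)} \<subseteq> {\<omega>\<in>space M. \<exists>t\<in>half_grid T. lam * sqrt (real T) < \<bar>W T t \<omega>\<bar>}"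
    proof safe
      fix \<omega> assume "\<omega> \<in> space M" "lam < grid_max W T \<omega> / sqrt (real T)"
      then have "lam * sqrt (real T) < grid_max W T \<omega>" using sT by (simp add: field_simps)
      then obtain x where "x \<in> insert 0 ((\<lambda>t. \<bar>W T t \<omega>\<bar>) ` half_grid T)" "lam * sqrt (real T) < x"
        unfolding grid_max_def by (subst (asm) Max_gr_iff) (auto simp: finite_half_grid)
      then show "\<exists>t\<in>half_grid T. lam * sqrt (real T) < \<bar>W T t \<omega>\<bar>" using l' by auto
    qed
    moreover have "measure M A \<le> 13 * 36 ^ 4 / lam ^ 4"
      using A(3) grid_tail_bound_arith[OF lam T] by linarith
    ultimately show "\<exists>A\<in>sets M. {\<omega>\<in>space M. lam < grid_max W T \<omega> / sqrt (real T)} \<subseteq> A \<and> measure M A \<le> 13 * 36^4 / lam^4"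
      using A by blast
  qed
qed

lemma exists_dyadic_block:
  fixes m u :: nat
  assumes "1 \<le> m" "m \<le> u"
  obtains j where "2 ^ j * m \<le> u" "u \<le> 2 ^ Suc j * m" "j < u"
proof -
  define q where "q = u div m"
  have "1 \<le> q"
    using assms div_le_mono[OF assms(2), of m] by (simp add: q_def)
  then obtain j where j: "2 ^ j \<le> q" "q < 2 ^ Suc j"
    using ex_power_ivl1[of 2 q] by auto
  have "2 ^ j * m \<le> q * m" using j(1) by simp
  also have "q * m \<le> u" unfolding q_def by simp
  finally have lower: "2 ^ j * m \<le> u" .
  have "u mod m < m" "q * m + u mod m = u"
    using assms(1) by (simp_all add: q_def)
  then have "u < (q + 1) * m" by (simp add: algebra_simps)
  also have "\<dots> \<le> 2 ^ Suc j * m"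
    using j(2) by (intro mult_le_mono1) simp
  finally have upper: "u \<le> 2 ^ Suc j * m" by simp
  have "j < 2 ^ j" by (rule less_exp)
  also have "2 ^ j \<le> u"
    using lower assms(1) by (metis le_trans mult_le_mono2 mult_1_right)
  finally show ?thesis
    using that lower upper by blast
qed

lemma dyadic_block_bound_arith:
  fixes lam m :: real
  assumes "0 < lam" "0 < m"
  shows "13 * 36 ^ 4 * (3 * (2 ^ Suc j * m) ^ 2) / (lam * 2 ^ j * sqrt m) ^ 4
       = 13 * 36 ^ 4 * 12 / lam ^ 4 * (1/4) ^ j"
proof -
  have "sqrt m ^ 4 = m ^ 2"
    using assms(2) by (simp add: power4_eq_xxxx power2_eq_square)
  moreover have "((2::real) ^ j) ^ 4 = 4 ^ j * 4 ^ j" "((2::real) ^ Suc j) ^ 2 = 4 * 4 ^ j"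
    by (simp_all add: power4_eq_xxxx power2_eq_square flip: power_mult_distrib)
  ultimately show ?thesis
    using assms by (simp add: power_mult_distrib field_simps power_one_over)
qed

lemma std_wiener_block_tail:
  assumes M: "prob_space M" and W: "std_wiener_on M L W" and L: "0 < L"
    and m: "1 \<le> m" and lam: "0 < lam"
  shows "\<exists>B\<in>sets M. {\<omega>\<in>space M. \<exists>u. 2 ^ j * m \<le> u \<and> u \<le> 2 ^ Suc j * m \<and> real u \<le> L \<and>
             lam * 2 ^ j * sqrt (real m) < \<bar>W (real u) \<omega>\<bar>} \<subseteq> B \<and>
           measure M B \<le> 13 * 36 ^ 4 * 12 / lam ^ 4 * (1/4) ^ j"
proof -
  define n where "n = min (2 ^ Suc j * real m) L"
  define P where "P = real ` {u. 2 ^ j * m \<le> u \<and> real u \<le> n}"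
  have n: "0 < n" "n \<le> L" "n \<le> 2 ^ Suc j * real m"
    using m L by (auto simp: n_def)
  have range: "{u. 2 ^ j * m \<le> u \<and> real u \<le> n} \<subseteq> {..2 ^ Suc j * m}"
  proof
    fix u assume "u \<in> {u. 2 ^ j * m \<le> u \<and> real u \<le> n}"
    then have "real u \<le> real (2 ^ Suc j * m)" using n(3) by simp
    then show "u \<in> {..2 ^ Suc j * m}" by (simp only: of_nat_le_iff) simp
  qed
  have P: "finite P" "P \<subseteq> {0..n}"
    using finite_subset[OF range] by (auto simp: P_def)
  have "card P \<le> card {..2 ^ Suc j * m}"
    unfolding P_def using finite_subset[OF range]
    by (intro order.trans[OF card_image_le] card_mono[OF _ range]) auto
  then have "real (card P) \<le> real (2 ^ Suc j * m + 1)"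
    by (simp only: of_nat_le_iff) simp
  then have card: "real (card P) \<le> 2 ^ Suc j * real m + 1"
    by simp
  have lam_j: "0 < lam * 2 ^ j * sqrt (real m)"
    using lam m by simp
  obtain B where B: "B \<in> sets M"
      "{\<omega>\<in>space M. \<exists>t\<in>P. lam * 2 ^ j * sqrt (real m) < \<bar>W t \<omega>\<bar>} \<subseteq> B"
      "measure M B \<le> 13 * 36 ^ 4 * (n ^ 2 + real (card P)) / (lam * 2 ^ j * sqrt (real m)) ^ 4"
    using std_wiener_max_tail[OF M W n(1,2) lam_j P] by blast
  have "n ^ 2 + real (card P) \<le> 3 * (2 ^ Suc j * real m) ^ 2"
  proof -
    define x where "x = 2 ^ Suc j * real m"
    have x: "1 \<le> x" unfolding x_def using m by (metis mult_1 mult_mono one_le_numeral one_le_power of_nat_1 of_nat_le_iff zero_le_numeral zero_le_one zero_le_power)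
    have "n ^ 2 \<le> x ^ 2" using n unfolding x_def by (intro power_mono) auto
    moreover have "x \<le> x ^ 2" "1 \<le> x ^ 2"
      using x by (auto simp: power2_eq_square intro: order_trans[OF _ mult_right_mono[of 1 x x]])
    ultimately show ?thesis using card unfolding x_def[symmetric] by linarith
  qed
  then have "measure M B \<le> 13 * 36 ^ 4 * (3 * (2 ^ Suc j * real m) ^ 2) / (lam * 2 ^ j * sqrt (real m)) ^ 4"
    using lam_j by (intro order.trans[OF B(3)] divide_right_mono mult_left_mono) auto
  also have "\<dots> = 13 * 36 ^ 4 * 12 / lam ^ 4 * (1/4) ^ j"
    using lam m by (intro dyadic_block_bound_arith) auto
  finally have "measure M B \<le> 13 * 36 ^ 4 * 12 / lam ^ 4 * (1/4) ^ j" .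
  moreover have "{\<omega>\<in>space M. \<exists>u. 2 ^ j * m \<le> u \<and> u \<le> 2 ^ Suc j * m \<and> real u \<le> L \<and>
      lam * 2 ^ j * sqrt (real m) < \<bar>W (real u) \<omega>\<bar>} \<subseteq> B"
  proof -
    have "real u \<in> P" if "2 ^ j * m \<le> u" "u \<le> 2 ^ Suc j * m" "real u \<le> L" for u
    proof -
      have "real u \<le> real (2 ^ Suc j * m)" using that(2) by (simp only: of_nat_le_iff)
      then have "real u \<le> n" using that(3) by (simp add: n_def)
      then show ?thesis using that(1) by (simp add: P_def)
    qed
    then show ?thesis using B(2) by blast
  qed
  ultimately show ?thesis
    using B(1) by blast
qed

text \<open>
  A weighted maximum of Hajek-Renyi type, controlled by splitting \<open>[m, T/2]\<close> into the dyadic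
  blocks \<open>[2\<^sup>j m, 2\<^sup>j\<^sup>+\<^sup>1 m]\<close>.
\<close>

definition weight_range :: "(nat \<Rightarrow> nat) \<Rightarrow> nat \<Rightarrow> nat set" where
  "weight_range m T = {u. m T \<le> u \<and> real u \<le> real T / 2}"

definition weighted_max :: "(nat \<Rightarrow> real \<Rightarrow> 'a \<Rightarrow> real) \<Rightarrow> (nat \<Rightarrow> nat) \<Rightarrow> nat \<Rightarrow> 'a \<Rightarrow> real" where
  "weighted_max W m T \<omega> =
     sqrt (real (m T)) * Max (insert 0 ((\<lambda>u. \<bar>W T (real u) \<omega>\<bar> / real u) ` weight_range m T))"

lemma finite_weight_range: "finite (weight_range m T)"
  by (rule finite_subset[of _ "{..T}"]) (auto simp: weight_range_def)

lemma weighted_max_ge: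
  "u \<in> weight_range m T \<Longrightarrow> sqrt (real (m T)) * (\<bar>W T (real u) \<omega>\<bar> / real u) \<le> weighted_max W m T \<omega>"
  unfolding weighted_max_def by (intro mult_left_mono Max_ge) (auto simp: finite_weight_range)

lemma weighted_max_nonneg: "0 \<le> weighted_max W m T \<omega>"
  unfolding weighted_max_def by (intro mult_nonneg_nonneg Max_ge) (auto simp: finite_weight_range)

lemma weighted_max_exceeds_block:
  assumes big: "lam < weighted_max W m T \<omega>" and m: "1 \<le> m T" and lam: "0 < lam"
  obtains j u where "j < T" "2 ^ j * m T \<le> u" "u \<le> 2 ^ Suc j * m T" "real u \<le> real T / 2"
    "lam * 2 ^ j * sqrt (real (m T)) < \<bar>W T (real u) \<omega>\<bar>"
proof -
  have sqrt_m: "0 < sqrt (real (m T))" using m by simp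
  have "lam / sqrt (real (m T)) < Max (insert 0 ((\<lambda>u. \<bar>W T (real u) \<omega>\<bar> / real u) ` weight_range m T))"
    using big sqrt_m unfolding weighted_max_def by (simp add: divide_less_eq mult.commute)
  moreover have "0 < lam / sqrt (real (m T))" using lam sqrt_m by simp
  ultimately obtain u where u: "u \<in> weight_range m T" and "lam / sqrt (real (m T)) < \<bar>W T (real u) \<omega>\<bar> / real u"
    by (subst (asm) Max_gr_iff) (auto simp: finite_weight_range)
  moreover have "0 < real u" using u m by (simp add: weight_range_def)
  ultimately have exceeds: "lam * real u < sqrt (real (m T)) * \<bar>W T (real u) \<omega>\<bar>"
    using sqrt_m by (simp add: field_simps)
  obtain j where j: "2 ^ j * m T \<le> u" "u \<le> 2 ^ Suc j * m T" "j < u"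
    using exists_dyadic_block[OF m] u by (auto simp: weight_range_def)
  have "real (2 ^ j * m T) \<le> real u"
    using j(1) by (simp only: of_nat_le_iff)
  then have "(lam * 2 ^ j * sqrt (real (m T))) * sqrt (real (m T)) \<le> lam * real u"
    using lam by simp
  then have "(lam * 2 ^ j * sqrt (real (m T))) * sqrt (real (m T)) < \<bar>W T (real u) \<omega>\<bar> * sqrt (real (m T))"
    using exceeds by (simp add: mult.commute)
  then have "lam * 2 ^ j * sqrt (real (m T)) < \<bar>W T (real u) \<omega>\<bar>"
    using mult_less_cancel_right_pos[OF sqrt_m] by blast
  moreover have "j < T" "real u \<le> real T / 2"
    using j(3) u by (auto simp: weight_range_def)
  ultimately show ?thesis
    using that j by blast
qed

lemma bounded_in_prob_weighted_max:
  assumes M: "prob_space M" and W: "\<And>T. std_wiener_on M (real T / 2) (W T)"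
    and m: "\<forall>\<^sub>F T in sequentially. 1 \<le> m T"
  shows "bounded_in_prob M (weighted_max W m)"
proof (rule bounded_in_prob_fourth_moment_tail[where K = "13 * 36 ^ 4 * 16"])
  fix lam :: real assume lam: "0 < lam"
  show "\<forall>\<^sub>F T in sequentially. \<exists>A\<in>sets M. {\<omega>\<in>space M. lam < weighted_max W m T \<omega>} \<subseteq> A \<and>
          measure M A \<le> 13 * 36 ^ 4 * 16 / lam ^ 4"
    using eventually_conj[OF m eventually_ge_at_top[of 1]]
  proof eventually_elim
    case (elim T)
    then have mT: "1 \<le> m T" and L: "0 < real T / 2" by auto
    have "\<forall>j. \<exists>B. B \<in> sets M \<and> {\<omega>\<in>space M. \<exists>u. 2 ^ j * m T \<le> u \<and> u \<le> 2 ^ Suc j * m T \<and>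
        real u \<le> real T / 2 \<and> lam * 2 ^ j * sqrt (real (m T)) < \<bar>W T (real u) \<omega>\<bar>} \<subseteq> B \<and>
        measure M B \<le> 13 * 36 ^ 4 * 12 / lam ^ 4 * (1/4) ^ j"
      using std_wiener_block_tail[OF M W L mT lam] by blast
    from choice[OF this] obtain B where
      "\<forall>j. B j \<in> sets M \<and> {\<omega>\<in>space M. \<exists>u. 2 ^ j * m T \<le> u \<and> u \<le> 2 ^ Suc j * m T \<and>
        real u \<le> real T / 2 \<and> lam * 2 ^ j * sqrt (real (m T)) < \<bar>W T (real u) \<omega>\<bar>} \<subseteq> B j \<and>
        measure M (B j) \<le> 13 * 36 ^ 4 * 12 / lam ^ 4 * (1/4) ^ j"
      by blast
    then have B: "\<And>j. B j \<in> sets M"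
      "\<And>j. {\<omega>\<in>space M. \<exists>u. 2 ^ j * m T \<le> u \<and> u \<le> 2 ^ Suc j * m T \<and>
        real u \<le> real T / 2 \<and> lam * 2 ^ j * sqrt (real (m T)) < \<bar>W T (real u) \<omega>\<bar>} \<subseteq> B j"
      "\<And>j. measure M (B j) \<le> 13 * 36 ^ 4 * 12 / lam ^ 4 * (1/4) ^ j"
      by blast+
    have "{\<omega>\<in>space M. lam < weighted_max W m T \<omega>} \<subseteq> (\<Union>j<T. B j)"
    proof
      fix \<omega> assume "\<omega> \<in> {\<omega>\<in>space M. lam < weighted_max W m T \<omega>}"
      then have "\<omega> \<in> space M" "lam < weighted_max W m T \<omega>" by auto
      from this(2) mT lam obtain j u where "j < T" "2 ^ j * m T \<le> u" "u \<le> 2 ^ Suc j * m T"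
        "real u \<le> real T / 2" "lam * 2 ^ j * sqrt (real (m T)) < \<bar>W T (real u) \<omega>\<bar>"
        by (rule weighted_max_exceeds_block)
      with \<open>\<omega> \<in> space M\<close> show "\<omega> \<in> (\<Union>j<T. B j)"
        using B(2)[of j] by blast
    qed
    moreover have "measure M (\<Union>j<T. B j) \<le> 13 * 36 ^ 4 * 16 / lam ^ 4"
    proof -
      have "measure M (\<Union>j<T. B j) \<le> (\<Sum>j<T. 13 * 36 ^ 4 * 12 / lam ^ 4 * (1/4) ^ j)"
        using B(1,3) by (intro order.trans[OF measure_UNION_le] sum_mono) auto
      also have "\<dots> = 13 * 36 ^ 4 * 12 / lam ^ 4 * (\<Sum>j<T. (1/4) ^ j)"
        by (simp only: sum_distrib_left)
      also have "\<dots> \<le> 13 * 36 ^ 4 * 12 / lam ^ 4 * (4/3)"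
      proof (intro mult_left_mono)
        have "(\<Sum>j<T. (1/4::real) ^ j) = (1 - (1/4) ^ T) / (1 - 1/4)"
          by (simp add: sum_gp_strict)
        then show "(\<Sum>j<T. (1/4::real) ^ j) \<le> 4/3" by simp
      qed (use lam in simp)
      finally show ?thesis by simp
    qed
    ultimately show ?case
      using B(1) by blast
  qed
qed

section \<open>Strong approximation of the error partial sums\<close>

lemma nat_floor_half: "nat \<lfloor>real T / 2\<rfloor> = T div 2"
  using floor_divide_of_nat_eq[of T 2, where 'a = real] by simp

lemma sum_atLeastAtMost_split:
  fixes f :: "nat \<Rightarrow> 'b::comm_monoid_add"
  assumes "k \<le> T"
  shows "(\<Sum>s=1..T. f s) = (\<Sum>s=1..k. f s) + (\<Sum>s=k+1..T. f s)"
proof -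
  have "{1..T} = {1..k} \<union> {k+1..T}" using assms by auto
  then show ?thesis by (simp add: sum.union_disjoint)
qed

lemma powr_le_sqrt:
  assumes "1 \<le> x" "0 < k" "k < 1/2"
  shows "x powr k \<le> sqrt x"
proof -
  have "x powr k \<le> x powr (1/2)" using assms by (intro powr_mono) auto
  also have "\<dots> = sqrt x" using assms by (simp add: powr_half_sqrt)
  finally show ?thesis .
qed

lemma abs_le_of_approx:
  fixes a s w B :: real
  assumes "\<bar>a - s * w\<bar> \<le> B" "0 < s"
  shows "\<bar>a\<bar> \<le> s * \<bar>w\<bar> + B"
  using assms abs_triangle_ineq[of "a - s * w" "s * w"] by (simp add: abs_mult)

lemma powr_neg_mult_le_imp_le:
  fixes y k a R :: real
  assumes "0 < y" "y powr (-k) * a \<le> R" "0 \<le> a"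
  shows "a \<le> y powr k * R"
proof -
  have "a = y powr k * (y powr (-k) * a)"
    using assms by (simp add: powr_minus field_simps)
  also have "\<dots> \<le> y powr k * R" using assms by (intro mult_left_mono) auto
  finally show ?thesis .
qed

lemma sqrt_mult_powr_div_le:
  fixes m t k R :: real
  assumes "1 \<le> m" "m \<le> t" "0 \<le> R" "0 < k" "k < 1/2"
  shows "sqrt m * (t powr k * R) / t \<le> R"
proof -
  have "sqrt m * t powr k \<le> sqrt t * sqrt t"
    using assms powr_le_sqrt[of t k] by (intro mult_mono) auto
  also have "\<dots> = t" using assms by simp
  finally have "sqrt m * t powr k * R \<le> t * R"
    using assms by (intro mult_right_mono) auto
  then show ?thesis
    using assms by (simp add: divide_le_eq mult_ac)
qed

lemma sqrt_mult_div_le_half: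
  fixes m T s a :: real
  assumes "0 \<le> m" "m \<le> T" "T / 2 \<le> s" "0 < T" "0 \<le> a"
  shows "sqrt m * (a / s) \<le> 2 * (a / sqrt T)"
proof -
  have "sqrt m * (a / s) \<le> sqrt T * (a / (T / 2))"
    using assms by (intro mult_mono frac_le) auto
  also have "\<dots> = 2 * (a / sqrt T)"
    using assms by (simp add: field_simps real_div_sqrt)
  finally show ?thesis .
qed

locale strong_approximation =
  fixes M :: "'a measure" and e :: "nat \<Rightarrow> 'a \<Rightarrow> real" and sig kap :: real
    and W1 W2 :: "nat \<Rightarrow> real \<Rightarrow> 'a \<Rightarrow> real"
  assumes prob_space: "prob_space M" and measurable_e: "\<And>t. e t \<in> borel_measurable M"
    and sig: "0 < sig" and kap: "0 < kap" "kap < 1/2"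
    and W1: "\<And>T. std_wiener_on M (real T / 2) (W1 T)"
    and W2: "\<And>T. std_wiener_on M (real T / 2) (W2 T)"
    and OP1: "OP1_sup M (\<lambda>T. {1 .. real T / 2})
           (\<lambda>T x \<omega>. x powr (-kap) * \<bar>(\<Sum>s=1..nat \<lfloor>x\<rfloor>. e s \<omega>) - sig * W1 T x \<omega>\<bar>)"
    and OP2: "OP1_sup M (\<lambda>T. {real T / 2 .. real T - 1})
           (\<lambda>T x \<omega>. (real T - x) powr (-kap) *
              \<bar>(\<Sum>s\<in>{nat \<lfloor>x\<rfloor> + 1 .. T}. e s \<omega>) - sig * W2 T (real T - x) \<omega>\<bar>)"
begin

definition esum :: "nat \<Rightarrow> 'a \<Rightarrow> real" where
  "esum t \<omega> = (\<Sum>s=1..t. e s \<omega>)"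

definition esum_max :: "nat \<Rightarrow> 'a \<Rightarrow> real" where
  "esum_max T \<omega> = Max ((\<lambda>t. \<bar>esum t \<omega>\<bar>) ` {..T})"

text \<open>
  Assumption (A) is only needed at the finitely many nodes below, so the weighted approximation
  errors can be taken as maxima rather than suprema.
\<close>

definition left_nodes :: "nat \<Rightarrow> real set" where
  "left_nodes T = real ` {t. 1 \<le> t \<and> real t \<le> real T / 2}"

definition right_nodes :: "nat \<Rightarrow> real set" where
  "right_nodes T = insert (real T / 2) (real ` {t. real T / 2 \<le> real t \<and> t + 1 \<le> T})"

definition left_error :: "nat \<Rightarrow> 'a \<Rightarrow> real" where
  "left_error T \<omega> = Max (insert 0 ((\<lambda>x. x powr (-kap) *
     \<bar>(\<Sum>s=1..nat \<lfloor>x\<rfloor>. e s \<omega>) - sig * W1 T x \<omega>\<bar>) ` left_nodes T))"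

definition right_error :: "nat \<Rightarrow> 'a \<Rightarrow> real" where
  "right_error T \<omega> = Max (insert 0 ((\<lambda>x. (real T - x) powr (-kap) *
     \<bar>(\<Sum>s\<in>{nat \<lfloor>x\<rfloor> + 1 .. T}. e s \<omega>) - sig * W2 T (real T - x) \<omega>\<bar>) ` right_nodes T))"

lemma finite_left_nodes: "finite (left_nodes T)"
  unfolding left_nodes_def by (rule finite_imageI, rule finite_subset[of _ "{..T}"]) auto

lemma finite_right_nodes: "finite (right_nodes T)"
  unfolding right_nodes_def by (rule finite.insertI, rule finite_imageI, rule finite_subset[of _ "{..T}"]) auto

lemma left_nodes_subset: "2 \<le> T \<Longrightarrow> left_nodes T \<subseteq> {1 .. real T / 2}"
  unfolding left_nodes_def by auto

lemma right_nodes_subset: "2 \<le> T \<Longrightarrow> right_nodes T \<subseteq> {real T / 2 .. real T - 1}"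
  unfolding right_nodes_def by (auto simp flip: of_nat_Suc)

lemma left_error_nonneg: "0 \<le> left_error T \<omega>"
  unfolding left_error_def by (rule Max_ge) (auto simp: finite_left_nodes)

lemma right_error_nonneg: "0 \<le> right_error T \<omega>"
  unfolding right_error_def by (rule Max_ge) (auto simp: finite_right_nodes)

lemma bounded_in_prob_left_error: "bounded_in_prob M left_error"
  using bounded_in_prob_Max_OP1_sup[OF OP1 finite_left_nodes left_nodes_subset]
  by (simp add: left_error_def[abs_def])

lemma bounded_in_prob_right_error: "bounded_in_prob M right_error"
  using bounded_in_prob_Max_OP1_sup[OF OP2 finite_right_nodes right_nodes_subset]
  by (simp add: right_error_def[abs_def])

lemma left_error_ge:
  "x \<in> left_nodes T \<Longrightarrow>
     x powr (-kap) * \<bar>(\<Sum>s=1..nat \<lfloor>x\<rfloor>. e s \<omega>) - sig * W1 T x \<omega>\<bar> \<le> left_error T \<omega>"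
  unfolding left_error_def by (rule Max_ge) (auto simp: finite_left_nodes)

lemma right_error_ge:
  "x \<in> right_nodes T \<Longrightarrow>
     (real T - x) powr (-kap) * \<bar>(\<Sum>s\<in>{nat \<lfloor>x\<rfloor> + 1 .. T}. e s \<omega>) - sig * W2 T (real T - x) \<omega>\<bar>
       \<le> right_error T \<omega>"
  unfolding right_error_def by (rule Max_ge) (auto simp: finite_right_nodes)

lemma left_approx:
  assumes "1 \<le> t" "real t \<le> real T / 2"
  shows "\<bar>esum t \<omega> - sig * W1 T (real t) \<omega>\<bar> \<le> real t powr kap * left_error T \<omega>"
proof -
  have "real t \<in> left_nodes T" unfolding left_nodes_def using assms by auto
  from left_error_ge[OF this] show ?thesis
    unfolding esum_def using assms by (intro powr_neg_mult_le_imp_le) auto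
qed

lemma right_approx:
  assumes "real T / 2 \<le> real t" "t < T"
  shows "\<bar>(\<Sum>s=t+1..T. e s \<omega>) - sig * W2 T (real T - real t) \<omega>\<bar> \<le> (real T - real t) powr kap * right_error T \<omega>"
proof -
  have "real t \<in> right_nodes T" unfolding right_nodes_def using assms by auto
  from right_error_ge[OF this] show ?thesis
    using assms by (intro powr_neg_mult_le_imp_le) auto
qed

lemma right_approx_half:
  assumes "0 < T"
  shows "\<bar>(\<Sum>s=T div 2+1..T. e s \<omega>) - sig * W2 T (real T / 2) \<omega>\<bar> \<le> (real T / 2) powr kap * right_error T \<omega>"
proof -
  have "real T / 2 \<in> right_nodes T" unfolding right_nodes_def by auto
  from right_error_ge[OF this] show ?thesis
    unfolding nat_floor_half using assms by (intro powr_neg_mult_le_imp_le) auto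
qed

lemma esum_split: "k \<le> T \<Longrightarrow> esum T \<omega> = esum k \<omega> + (\<Sum>s=k+1..T. e s \<omega>)"
  unfolding esum_def by (rule sum_atLeastAtMost_split)

lemma esum_max_ge: "t \<le> T \<Longrightarrow> \<bar>esum t \<omega>\<bar> \<le> esum_max T \<omega>"
  unfolding esum_max_def by (rule Max_ge) auto

lemma esum_max_nonneg: "0 \<le> esum_max T \<omega>"
  using esum_max_ge[of 0 T \<omega>] by simp

lemma esum_left_le:
  assumes "real t \<le> real T / 2"
  shows "\<bar>esum t \<omega>\<bar> \<le> sig * grid_max W1 T \<omega> + real T powr kap * left_error T \<omega>"
proof (cases "t = 0")
  case True
  then show ?thesis
    using sig grid_max_nonneg[of W1 T \<omega>] left_error_nonneg[of T \<omega>] by (simp add: esum_def)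
next
  case False
  have "t \<le> T div 2" using assms by linarith
  then have "\<bar>W1 T (real t) \<omega>\<bar> \<le> grid_max W1 T \<omega>"
    by (intro grid_max_ge) (simp add: half_grid_def)
  moreover have "real t powr kap \<le> real T powr kap"
    using assms kap by (intro powr_mono2) auto
  moreover have "\<bar>esum t \<omega>\<bar> \<le> sig * \<bar>W1 T (real t) \<omega>\<bar> + real t powr kap * left_error T \<omega>"
    using left_approx[of t T \<omega>] False assms sig by (intro abs_le_of_approx) auto
  ultimately show ?thesis
    using sig left_error_nonneg[of T \<omega>]
    by (elim order.trans[rotated 2]) (intro add_mono mult_left_mono mult_right_mono; simp)
qed

lemma esum_tail_le:
  assumes "T div 2 \<le> t" "t \<le> T"
  shows "\<bar>\<Sum>s=t+1..T. e s \<omega>\<bar> \<le> sig * grid_max W2 T \<omega> + real T powr kap * right_error T \<omega>"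
proof (cases "t = T")
  case True
  then show ?thesis
    using sig grid_max_nonneg[of W2 T \<omega>] right_error_nonneg[of T \<omega>] by simp
next
  case False
  define x where "x = (if t = T div 2 then real T / 2 else real (T - t))"
  have "T - t \<le> T div 2" if "t \<noteq> T div 2"
    using assms that by linarith
  then have x: "x \<in> half_grid T" "0 \<le> x" "x \<le> real T"
    by (auto simp: x_def half_grid_def)
  have approx: "\<bar>(\<Sum>s=t+1..T. e s \<omega>) - sig * W2 T x \<omega>\<bar> \<le> x powr kap * right_error T \<omega>"
  proof (cases "t = T div 2")
    case True
    with False have "0 < T" by auto
    with True show ?thesis
      using right_approx_half[of T \<omega>] by (simp add: x_def)
  next
    case t: False
    have "real T / 2 \<le> real t" "t < T"
      using assms False t by linarith+
    moreover have "real (T - t) = real T - real t"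
      using assms by simp
    ultimately show ?thesis
      using right_approx[of T t \<omega>] t by (simp add: x_def)
  qed
  have "\<bar>\<Sum>s=t+1..T. e s \<omega>\<bar> \<le> sig * \<bar>W2 T x \<omega>\<bar> + x powr kap * right_error T \<omega>"
    using approx sig by (rule abs_le_of_approx)
  moreover have "\<bar>W2 T x \<omega>\<bar> \<le> grid_max W2 T \<omega>"
    using x(1) by (rule grid_max_ge)
  moreover have "x powr kap \<le> real T powr kap"
    using x kap by (intro powr_mono2) auto
  ultimately show ?thesis
    using sig right_error_nonneg[of T \<omega>]
    by (elim order.trans[rotated 2]) (intro add_mono mult_left_mono mult_right_mono; simp)
qed

lemma esum_max_le:
  "esum_max T \<omega> \<le> 2 * sig * (grid_max W1 T \<omega> + grid_max W2 T \<omega>)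
                   + 2 * real T powr kap * (left_error T \<omega> + right_error T \<omega>)"
proof -
  define left where "left = sig * grid_max W1 T \<omega> + real T powr kap * left_error T \<omega>"
  define right where "right = sig * grid_max W2 T \<omega> + real T powr kap * right_error T \<omega>"
  have "0 \<le> right"
    using sig unfolding right_def
    by (auto intro!: add_nonneg_nonneg mult_nonneg_nonneg grid_max_nonneg right_error_nonneg)
  have "\<bar>esum t \<omega>\<bar> \<le> left + 2 * right" if t: "t \<le> T" for t
  proof (cases "t \<le> T div 2")
    case True
    then have "real t \<le> real T / 2" by linarith
    then have "\<bar>esum t \<omega>\<bar> \<le> left" unfolding left_def by (rule esum_left_le)
    with \<open>0 \<le> right\<close> show ?thesis by linarith
  next
    case False
    have "esum t \<omega> = esum (T div 2) \<omega> + (\<Sum>s=T div 2+1..T. e s \<omega>) - (\<Sum>s=t+1..T. e s \<omega>)"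
      using esum_split[OF t, of \<omega>] esum_split[of "T div 2" T \<omega>] by simp
    moreover have "\<bar>esum (T div 2) \<omega>\<bar> \<le> left"
      unfolding left_def by (rule esum_left_le) linarith
    moreover have "\<bar>\<Sum>s=T div 2+1..T. e s \<omega>\<bar> \<le> right" "\<bar>\<Sum>s=t+1..T. e s \<omega>\<bar> \<le> right"
      unfolding right_def using False t by (intro esum_tail_le; simp)+
    ultimately show ?thesis by linarith
  qed
  then have "esum_max T \<omega> \<le> left + 2 * right"
    unfolding esum_max_def by (intro Max.boundedI) auto
  also have "\<dots> \<le> 2 * sig * (grid_max W1 T \<omega> + grid_max W2 T \<omega>)
                   + 2 * real T powr kap * (left_error T \<omega> + right_error T \<omega>)"
    using sig unfolding left_def right_def
    by (simp add: algebra_simps add_increasing mult_nonneg_nonneg grid_max_nonneg left_error_nonneg)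
  finally show ?thesis .
qed

lemma bounded_in_prob_esum_max: "bounded_in_prob M (\<lambda>T \<omega>. esum_max T \<omega> / sqrt (real T))"
proof (rule bounded_in_prob_mono)
  show "bounded_in_prob M (\<lambda>T \<omega>. 2 * sig * (grid_max W1 T \<omega> / sqrt (real T))
          + 2 * sig * (grid_max W2 T \<omega> / sqrt (real T)) + (2 * left_error T \<omega> + 2 * right_error T \<omega>))"
    using sig by (intro bounded_in_prob_add bounded_in_prob_cmult bounded_in_prob_left_error
        bounded_in_prob_right_error bounded_in_prob_grid_max[OF prob_space W1]
        bounded_in_prob_grid_max[OF prob_space W2]) auto
  show "\<forall>\<^sub>F T in sequentially. \<forall>\<omega>\<in>space M. esum_max T \<omega> / sqrt (real T) \<le>
          2 * sig * (grid_max W1 T \<omega> / sqrt (real T)) + 2 * sig * (grid_max W2 T \<omega> / sqrt (real T))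
          + (2 * left_error T \<omega> + 2 * right_error T \<omega>)"
    using eventually_ge_at_top[of 1]
  proof eventually_elim
    case (elim T)
    show ?case
    proof
      fix \<omega>
      have sqrt_T: "0 < sqrt (real T)" using elim by simp
      have "real T powr kap / sqrt (real T) \<le> 1"
        using powr_le_sqrt[of "real T" kap] elim kap sqrt_T by simp
      then have "real T powr kap / sqrt (real T) * (left_error T \<omega> + right_error T \<omega>)
          \<le> left_error T \<omega> + right_error T \<omega>"
        using left_error_nonneg right_error_nonneg by (intro mult_left_le_one_le) auto
      moreover have "esum_max T \<omega> / sqrt (real T)
          \<le> (2 * sig * (grid_max W1 T \<omega> + grid_max W2 T \<omega>)
              + 2 * real T powr kap * (left_error T \<omega> + right_error T \<omega>)) / sqrt (real T)"
        using esum_max_le sqrt_T by (intro divide_right_mono) auto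
      ultimately show "esum_max T \<omega> / sqrt (real T) \<le>
          2 * sig * (grid_max W1 T \<omega> / sqrt (real T)) + 2 * sig * (grid_max W2 T \<omega> / sqrt (real T))
          + (2 * left_error T \<omega> + 2 * right_error T \<omega>)"
        by (simp add: add_divide_distrib algebra_simps)
    qed
  qed
qed

lemma weighted_left_le:
  assumes "1 \<le> m T" "m T \<le> t" "real t \<le> real T / 2"
  shows "sqrt (real (m T)) * (\<bar>esum t \<omega>\<bar> / real t) \<le> sig * weighted_max W1 m T \<omega> + left_error T \<omega>"
proof -
  have "1 \<le> t" using assms by simp
  then have "\<bar>esum t \<omega> - sig * W1 T (real t) \<omega>\<bar> \<le> real t powr kap * left_error T \<omega>"
    using assms(3) by (rule left_approx)
  then have "\<bar>esum t \<omega>\<bar> \<le> sig * \<bar>W1 T (real t) \<omega>\<bar> + real t powr kap * left_error T \<omega>"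
    using sig by (rule abs_le_of_approx)
  then have "sqrt (real (m T)) * (\<bar>esum t \<omega>\<bar> / real t)
      \<le> sqrt (real (m T)) * ((sig * \<bar>W1 T (real t) \<omega>\<bar> + real t powr kap * left_error T \<omega>) / real t)"
    by (intro mult_left_mono divide_right_mono) auto
  also have "\<dots> = sig * (sqrt (real (m T)) * (\<bar>W1 T (real t) \<omega>\<bar> / real t))
        + sqrt (real (m T)) * (real t powr kap * left_error T \<omega>) / real t"
    by (simp add: add_divide_distrib distrib_left)
  also have "\<dots> \<le> sig * weighted_max W1 m T \<omega> + left_error T \<omega>"
  proof (intro add_mono mult_left_mono)
    show "sqrt (real (m T)) * (\<bar>W1 T (real t) \<omega>\<bar> / real t) \<le> weighted_max W1 m T \<omega>"
      using assms by (intro weighted_max_ge) (simp add: weight_range_def)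
    show "sqrt (real (m T)) * (real t powr kap * left_error T \<omega>) / real t \<le> left_error T \<omega>"
      using assms kap left_error_nonneg by (intro sqrt_mult_powr_div_le) auto
  qed (use sig in simp)
  finally show ?thesis .
qed

lemma weighted_right_le:
  assumes "1 \<le> m T" "m T \<le> T - t" "real T / 2 \<le> real t" "t < T"
  shows "sqrt (real (m T)) * (\<bar>esum T \<omega> - esum t \<omega>\<bar> / real (T - t))
       \<le> sig * weighted_max W2 m T \<omega> + right_error T \<omega>"
proof -
  let ?u = "real (T - t)"
  have sum_eq: "(\<Sum>s=t+1..T. e s \<omega>) = esum T \<omega> - esum t \<omega>"
    using esum_split[of t T \<omega>] assms(4) by simp
  have u: "real T - real t = ?u"
    using assms(4) by (simp add: of_nat_diff)
  have "\<bar>(esum T \<omega> - esum t \<omega>) - sig * W2 T ?u \<omega>\<bar> \<le> ?u powr kap * right_error T \<omega>"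
    using right_approx[OF assms(3,4), of \<omega>] unfolding u sum_eq .
  then have "\<bar>esum T \<omega> - esum t \<omega>\<bar> \<le> sig * \<bar>W2 T ?u \<omega>\<bar> + ?u powr kap * right_error T \<omega>"
    using sig by (rule abs_le_of_approx)
  then have "sqrt (real (m T)) * (\<bar>esum T \<omega> - esum t \<omega>\<bar> / ?u)
      \<le> sqrt (real (m T)) * ((sig * \<bar>W2 T ?u \<omega>\<bar> + ?u powr kap * right_error T \<omega>) / ?u)"
    by (intro mult_left_mono divide_right_mono) auto
  also have "\<dots> = sig * (sqrt (real (m T)) * (\<bar>W2 T ?u \<omega>\<bar> / ?u))
        + sqrt (real (m T)) * (?u powr kap * right_error T \<omega>) / ?u"
    by (simp add: add_divide_distrib distrib_left)
  also have "\<dots> \<le> sig * weighted_max W2 m T \<omega> + right_error T \<omega>"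
  proof (intro add_mono mult_left_mono)
    have "real (T - t) \<le> real T / 2" using assms(3) u by linarith
    then show "sqrt (real (m T)) * (\<bar>W2 T ?u \<omega>\<bar> / ?u) \<le> weighted_max W2 m T \<omega>"
      using assms(2) by (intro weighted_max_ge) (simp add: weight_range_def)
    show "sqrt (real (m T)) * (?u powr kap * right_error T \<omega>) / ?u \<le> right_error T \<omega>"
      using assms kap right_error_nonneg by (intro sqrt_mult_powr_div_le) auto
  qed (use sig in simp)
  finally show ?thesis .
qed

definition D_noise :: "(nat \<Rightarrow> nat) \<Rightarrow> nat \<Rightarrow> 'a \<Rightarrow> real" where
  "D_noise m T \<omega> = sig * weighted_max W1 m T \<omega> + sig * weighted_max W2 m T \<omega>
     + left_error T \<omega> + right_error T \<omega> + 4 * (esum_max T \<omega> / sqrt (real T))"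

lemma bounded_in_prob_D_noise:
  assumes "\<forall>\<^sub>F T in sequentially. 1 \<le> m T"
  shows "bounded_in_prob M (D_noise m)"
  unfolding D_noise_def[abs_def] using sig
  by (intro bounded_in_prob_add bounded_in_prob_cmult bounded_in_prob_left_error
      bounded_in_prob_right_error bounded_in_prob_esum_max
      bounded_in_prob_weighted_max[OF prob_space W1 assms]
      bounded_in_prob_weighted_max[OF prob_space W2 assms]) auto

lemma D_noise_bound:
  assumes m: "1 \<le> m T" "2 * m T \<le> T" and t: "m T \<le> t" "t \<le> T - m T"
  shows "sqrt (real (m T)) * \<bar>esum t \<omega> / real t - (esum T \<omega> - esum t \<omega>) / real (T - t)\<bar>
       \<le> D_noise m T \<omega>"
proof -
  let ?s = "sqrt (real (m T))" and ?G = "esum_max T \<omega> / sqrt (real T)"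
  have "0 < t" "t < T" "real T - real t = real (T - t)"
    using m t by auto
  have "\<bar>esum t \<omega> / real t - (esum T \<omega> - esum t \<omega>) / real (T - t)\<bar>
      \<le> \<bar>esum t \<omega>\<bar> / real t + \<bar>esum T \<omega> - esum t \<omega>\<bar> / real (T - t)"
    using abs_triangle_ineq4[of "esum t \<omega> / real t" "(esum T \<omega> - esum t \<omega>) / real (T - t)"]
    by (simp add: abs_divide)
  then have "?s * \<bar>esum t \<omega> / real t - (esum T \<omega> - esum t \<omega>) / real (T - t)\<bar>
      \<le> ?s * (\<bar>esum t \<omega>\<bar> / real t) + ?s * (\<bar>esum T \<omega> - esum t \<omega>\<bar> / real (T - t))"
    unfolding distrib_left[symmetric] by (rule mult_left_mono) simp
  moreover have far: "?s * (x / y) \<le> 2 * (x / sqrt (real T))" if "0 \<le> x" "real T / 2 \<le> y" for x y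
    using that m by (intro sqrt_mult_div_le_half) auto
  have "\<bar>esum t \<omega>\<bar> \<le> esum_max T \<omega>" "\<bar>esum T \<omega>\<bar> \<le> esum_max T \<omega>"
    using \<open>t < T\<close> by (auto intro: esum_max_ge)
  then have G: "\<bar>esum t \<omega>\<bar> / sqrt (real T) \<le> ?G" "\<bar>esum T \<omega> - esum t \<omega>\<bar> / sqrt (real T) \<le> 2 * ?G"
    by (auto simp: divide_right_mono)
  have nonneg: "0 \<le> sig * weighted_max W1 m T \<omega>" "0 \<le> sig * weighted_max W2 m T \<omega>"
    "0 \<le> left_error T \<omega>" "0 \<le> right_error T \<omega>" "0 \<le> ?G"
    using sig by (simp_all add: weighted_max_nonneg left_error_nonneg right_error_nonneg esum_max_nonneg)
  consider "real t \<le> real T / 2" | "real T / 2 \<le> real t"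
    by linarith
  then have "?s * (\<bar>esum t \<omega>\<bar> / real t) + ?s * (\<bar>esum T \<omega> - esum t \<omega>\<bar> / real (T - t))
      \<le> D_noise m T \<omega>"
  proof cases
    case 1
    have "?s * (\<bar>esum t \<omega>\<bar> / real t) + ?s * (\<bar>esum T \<omega> - esum t \<omega>\<bar> / real (T - t))
        \<le> (sig * weighted_max W1 m T \<omega> + left_error T \<omega>) + 2 * (2 * ?G)"
    proof (intro add_mono)
      show "?s * (\<bar>esum t \<omega>\<bar> / real t) \<le> sig * weighted_max W1 m T \<omega> + left_error T \<omega>"
        using 1 m t by (intro weighted_left_le) auto
      have "?s * (\<bar>esum T \<omega> - esum t \<omega>\<bar> / real (T - t)) \<le> 2 * (\<bar>esum T \<omega> - esum t \<omega>\<bar> / sqrt (real T))"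
        using 1 \<open>real T - real t = real (T - t)\<close> by (intro far) auto
      also have "\<dots> \<le> 2 * (2 * ?G)"
        using G(2) by simp
      finally show "?s * (\<bar>esum T \<omega> - esum t \<omega>\<bar> / real (T - t)) \<le> 2 * (2 * ?G)" .
    qed
    also have "\<dots> \<le> D_noise m T \<omega>"
      using nonneg unfolding D_noise_def by linarith
    finally show ?thesis .
  next
    case 2
    have "?s * (\<bar>esum t \<omega>\<bar> / real t) + ?s * (\<bar>esum T \<omega> - esum t \<omega>\<bar> / real (T - t))
        \<le> 2 * ?G + (sig * weighted_max W2 m T \<omega> + right_error T \<omega>)"
    proof (intro add_mono)
      have "?s * (\<bar>esum t \<omega>\<bar> / real t) \<le> 2 * (\<bar>esum t \<omega>\<bar> / sqrt (real T))"
        using 2 by (intro far) auto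
      also have "\<dots> \<le> 2 * ?G"
        using G(1) by simp
      finally show "?s * (\<bar>esum t \<omega>\<bar> / real t) \<le> 2 * ?G" .
      show "?s * (\<bar>esum T \<omega> - esum t \<omega>\<bar> / real (T - t)) \<le> sig * weighted_max W2 m T \<omega> + right_error T \<omega>"
        using 2 m t \<open>t < T\<close> by (intro weighted_right_le) auto
    qed
    also have "\<dots> \<le> D_noise m T \<omega>"
      using nonneg unfolding D_noise_def by linarith
    finally show ?thesis .
  qed
  ultimately show ?thesis by linarith
qed

end

section \<open>A single change in the mean\<close>

lemma Max_abs_add_le:
  fixes d b :: "'a \<Rightarrow> real"
  assumes S: "finite S" "t0 \<in> S" and dle: "\<forall>t\<in>S. \<bar>d t\<bar> \<le> \<bar>d t0\<bar>" and ble: "\<forall>t\<in>S. \<bar>b t\<bar> \<le> B"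
  shows "\<bar>Max ((\<lambda>t. \<bar>d t + b t\<bar>) ` S) - \<bar>d t0\<bar>\<bar> \<le> B"
proof -
  have lo: "\<bar>d t0 + b t0\<bar> \<le> Max ((\<lambda>t. \<bar>d t + b t\<bar>) ` S)" using S by (intro Max_ge) auto
  have "\<bar>d t0\<bar> \<le> \<bar>d t0 + b t0\<bar> + \<bar>b t0\<bar>" using abs_triangle_ineq4[of "d t0 + b t0" "b t0"] by simp
  moreover have "\<bar>b t0\<bar> \<le> B" using ble S by auto
  ultimately have lo': "\<bar>d t0\<bar> - B \<le> Max ((\<lambda>t. \<bar>d t + b t\<bar>) ` S)" using lo by linarith
  have hi: "Max ((\<lambda>t. \<bar>d t + b t\<bar>) ` S) \<le> \<bar>d t0\<bar> + B"
  proof (rule Max.boundedI)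
    show "finite ((\<lambda>t. \<bar>d t + b t\<bar>) ` S)" using S by auto
    show "(\<lambda>t. \<bar>d t + b t\<bar>) ` S \<noteq> {}" using S by auto
    fix y assume "y \<in> (\<lambda>t. \<bar>d t + b t\<bar>) ` S"
    then obtain t where t: "t \<in> S" "y = \<bar>d t + b t\<bar>" by auto
    have "\<bar>d t + b t\<bar> \<le> \<bar>d t\<bar> + \<bar>b t\<bar>" by (rule abs_triangle_ineq)
    moreover have "\<bar>d t\<bar> \<le> \<bar>d t0\<bar>" "\<bar>b t\<bar> \<le> B" using t dle ble by auto
    ultimately show "y \<le> \<bar>d t0\<bar> + B" using t by linarith
  qed
  show ?thesis using lo' hi by (simp add: abs_le_iff)
qed

lemma ratio_mult_le:
  fixes a d m :: real
  assumes "0 \<le> a" "a \<le> d" "m \<le> d" "0 \<le> m"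
  shows "a / d * m \<le> a" "a / d * m \<le> m"
proof -
  have "a / d \<le> 1" "0 \<le> a / d" using assms by (auto simp: divide_le_eq)
  then show "a / d * m \<le> m" using mult_left_le_one_le[of m "a / d"] assms(4) by blast
  have "a / d * m \<le> a / d * d" using assms \<open>0 \<le> a / d\<close> by (intro mult_left_mono) auto
  then show "a / d * m \<le> a" using assms by (cases "d = 0") auto
qed

locale single_change_mean =
  fixes mu :: "nat \<Rightarrow> real" and ts T :: nat
  assumes change_point: "1 < ts" "ts < T"
    and mu_eq: "\<forall>t\<in>{1..T}. mu t = (if t \<le> ts then mu 1 else mu T)"
begin

lemma mu_before: "1 \<le> t \<Longrightarrow> t \<le> ts \<Longrightarrow> mu t = mu 1"
  using bspec[OF mu_eq, of t] change_point by simp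

lemma mu_after: "ts < t \<Longrightarrow> t \<le> T \<Longrightarrow> mu t = mu T"
  using bspec[OF mu_eq, of t] change_point by simp

definition mean_sum :: "nat \<Rightarrow> real" where
  "mean_sum t = (\<Sum>s=1..t. mu s)"

definition jump :: real where
  "jump = mu (ts + 1) - mu ts"

lemma jump_eq: "jump = mu T - mu 1"
  using mu_before[of ts] mu_after[of "ts + 1"] change_point by (simp add: jump_def)

lemma mean_sum_le:
  assumes "t \<le> ts"
  shows "mean_sum t = real t * mu 1"
proof -
  have "(\<Sum>s=1..t. mu s) = (\<Sum>s=1..t. mu 1)"
    using assms by (intro sum.cong refl mu_before) auto
  then show ?thesis by (simp add: mean_sum_def)
qed

lemma mean_sum_ge:
  assumes "ts \<le> t" "t \<le> T"
  shows "mean_sum t = real ts * mu 1 + (real t - real ts) * mu T"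
proof -
  have "(\<Sum>s=ts+1..t. mu s) = (\<Sum>s=ts+1..t. mu T)"
    using assms by (intro sum.cong refl mu_after) auto
  then show ?thesis
    using sum_atLeastAtMost_split[OF assms(1), of mu] mean_sum_le[of ts] assms
    by (simp add: mean_sum_def)
qed

definition cusum_drift :: "nat \<Rightarrow> real" where
  "cusum_drift t = mean_sum t - real t / real T * mean_sum T"

lemma abs_cusum_drift:
  assumes "t \<le> T"
  shows "\<bar>cusum_drift t\<bar> = real (min t ts) * (real T - real (max t ts)) * \<bar>jump\<bar> / real T"
proof (cases "t \<le> ts")
  case True
  then have "cusum_drift t = - (real t * (real T - real ts) * jump / real T)"
    using change_point unfolding cusum_drift_def jump_eq by (simp add: mean_sum_le mean_sum_ge field_simps)
  then show ?thesis using True change_point by (simp add: abs_mult max_def)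
next
  case False
  then have "cusum_drift t = - (real ts * (real T - real t) * jump / real T)"
    using change_point assms unfolding cusum_drift_def jump_eq by (simp add: mean_sum_ge field_simps)
  then show ?thesis using False assms by (simp add: abs_mult max_def)
qed

lemma abs_cusum_drift_le:
  assumes "t \<le> T"
  shows "\<bar>cusum_drift t\<bar> \<le> \<bar>cusum_drift ts\<bar>"
proof -
  have "real (min t ts) * (real T - real (max t ts)) \<le> real ts * (real T - real ts)"
    using assms change_point by (intro mult_mono) auto
  then have "real (min t ts) * (real T - real (max t ts)) * \<bar>jump\<bar> / real T
      \<le> real ts * (real T - real ts) * \<bar>jump\<bar> / real T"
    by (intro divide_right_mono mult_right_mono) auto
  moreover have "\<bar>cusum_drift ts\<bar> = real ts * (real T - real ts) * \<bar>jump\<bar> / real T"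
    using abs_cusum_drift[of ts] change_point by simp
  ultimately show ?thesis
    unfolding abs_cusum_drift[OF assms] by simp
qed

definition diff_drift :: "nat \<Rightarrow> real" where
  "diff_drift t = mean_sum t / real t - (mean_sum T - mean_sum t) / real (T - t)"

lemma abs_diff_drift:
  assumes "1 \<le> t" "t < T"
  shows "\<bar>diff_drift t\<bar> = (if t \<le> ts then (real T - real ts) / (real T - real t) else real ts / real t) * \<bar>jump\<bar>"
proof -
  have diff: "real (T - t) = real T - real t" "0 < real T - real t"
    using assms by auto
  show ?thesis
  proof (cases "t \<le> ts")
    case True
    then have "diff_drift t = (real T - real ts) * (- jump) / (real T - real t)"
      using assms change_point diff unfolding diff_drift_def jump_eq by (simp add: mean_sum_le mean_sum_ge field_simps)
    then show ?thesis using True change_point diff by (simp add: abs_mult abs_divide)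
  next
    case False
    then have "diff_drift t = real ts * (- jump) / real t"
      using assms change_point diff unfolding diff_drift_def jump_eq by (simp add: mean_sum_ge field_simps)
    then show ?thesis using False by (simp add: abs_mult abs_divide)
  qed
qed

lemma abs_diff_drift_le:
  assumes m: "1 \<le> m" and t: "m \<le> t" "t \<le> T - m"
  shows "\<bar>diff_drift t\<bar> \<le> real (min (min ts (T - ts)) m) / real m * \<bar>jump\<bar>"
proof -
  define r where "r = (if t \<le> ts then (real T - real ts) / (real T - real t) else real ts / real t)"
  have "t < T" "real m \<le> real T - real t" using m t by linarith+
  have "r * real m \<le> real ts" "r * real m \<le> real T - real ts" "r * real m \<le> real m"
  proof (atomize (full), cases "t \<le> ts")
    case True
    then show "r * real m \<le> real ts \<and> r * real m \<le> real T - real ts \<and> r * real m \<le> real m"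
      using ratio_mult_le[of "real T - real ts" "real T - real t" "real m"] change_point t
        \<open>real m \<le> real T - real t\<close> by (simp add: r_def)
  next
    case False
    then show "r * real m \<le> real ts \<and> r * real m \<le> real T - real ts \<and> r * real m \<le> real m"
      using ratio_mult_le[of "real ts" "real t" "real m"] change_point t
        \<open>real m \<le> real T - real t\<close> by (simp add: r_def)
  qed
  then have "r * real m \<le> real (min (min ts (T - ts)) m)"
    using change_point by (simp add: of_nat_diff)
  then have "r \<le> real (min (min ts (T - ts)) m) / real m"
    using m by (simp add: le_divide_eq)
  then have "r * \<bar>jump\<bar> \<le> real (min (min ts (T - ts)) m) / real m * \<bar>jump\<bar>"
    by (rule mult_right_mono) simp
  then show ?thesis
    using abs_diff_drift[of t] m t \<open>t < T\<close> unfolding r_def[symmetric] by simp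
qed

definition diff_drift_argmax :: "nat \<Rightarrow> nat" where
  "diff_drift_argmax m = max m (min ts (T - m))"

lemma abs_diff_drift_argmax:
  assumes m: "1 \<le> m" "2 * m \<le> T"
  shows "diff_drift_argmax m \<in> {m..T - m}"
    and "\<bar>diff_drift (diff_drift_argmax m)\<bar> = real (min (min ts (T - ts)) m) / real m * \<bar>jump\<bar>"
proof -
  show "diff_drift_argmax m \<in> {m..T - m}"
    using m by (auto simp: diff_drift_argmax_def)
  have "m < T" using m by linarith
  consider "ts < m" | "m \<le> ts" "T - m < ts" | "m \<le> ts" "ts \<le> T - m"
    by linarith
  then show "\<bar>diff_drift (diff_drift_argmax m)\<bar> = real (min (min ts (T - ts)) m) / real m * \<bar>jump\<bar>"
  proof cases
    case 1
    then have "diff_drift_argmax m = m" "min (min ts (T - ts)) m = ts"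
      using m by (auto simp: diff_drift_argmax_def)
    moreover have "\<bar>diff_drift m\<bar> = real ts / real m * \<bar>jump\<bar>"
      using abs_diff_drift[of m] 1 m \<open>m < T\<close> by simp
    ultimately show ?thesis by simp
  next
    case 2
    then have "diff_drift_argmax m = T - m" "min (min ts (T - ts)) m = T - ts"
      using m by (auto simp: diff_drift_argmax_def)
    moreover have "real T - real (T - m) = real m" "real (T - ts) = real T - real ts"
      using m change_point by auto
    moreover have "\<bar>diff_drift (T - m)\<bar> = (real T - real ts) / (real T - real (T - m)) * \<bar>jump\<bar>"
      using abs_diff_drift[of "T - m"] 2 m by simp
    ultimately show ?thesis by simp
  next
    case 3
    then have "diff_drift_argmax m = ts" "min (min ts (T - ts)) m = m"
      using m by (auto simp: diff_drift_argmax_def)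
    moreover have "\<bar>diff_drift ts\<bar> = \<bar>jump\<bar>"
      using abs_diff_drift[of ts] change_point by simp
    ultimately show ?thesis using m by simp
  qed
qed

end

section \<open>The statistics \<open>A\<^sub>T\<close> and \<open>D\<^sub>T\<close>\<close>

lemma measurable_A_stat [measurable]:
  assumes [measurable]: "\<And>t. e t \<in> borel_measurable M"
  shows "(\<lambda>\<omega>. A_stat (\<lambda>t \<omega>. mu t + e t \<omega>) T \<omega>) \<in> borel_measurable M"
  unfolding A_stat_def by measurable

lemma measurable_D_stat [measurable]:
  assumes [measurable]: "\<And>t. e t \<in> borel_measurable M"
  shows "(\<lambda>\<omega>. D_stat (\<lambda>t \<omega>. mu t + e t \<omega>) T m \<omega>) \<in> borel_measurable M"
  unfolding D_stat_def by measurable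

lemma powr_minus_three_halves:
  fixes x :: real
  assumes "0 < x"
  shows "x powr (-3/2) = 1 / (x * sqrt x)"
proof -
  have "(3/2::real) = 1 + 1/2" by simp
  then have "x powr (3/2) = x powr 1 * x powr (1/2)"
    by (metis powr_add)
  also have "\<dots> = x * sqrt x"
    using assms by (simp add: powr_half_sqrt)
  finally show ?thesis
    using powr_minus[of x "3/2"] by (simp add: inverse_eq_divide)
qed

context strong_approximation
begin

lemma A_stat_deviation:
  assumes "single_change_mean mu ts T"
  shows "\<bar>A_stat (\<lambda>t \<omega>. mu t + e t \<omega>) T \<omega>
           - real T powr (-3/2) * real ts * real (T - ts) * \<bar>mu (ts + 1) - mu ts\<bar>\<bar>
         \<le> 2 * (esum_max T \<omega> / sqrt (real T))"
proof -
  interpret single_change_mean mu ts T by fact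
  define b where "b t = esum t \<omega> - real t / real T * esum T \<omega>" for t
  have "(\<Sum>s=1..t. mu s + e s \<omega>) = mean_sum t + esum t \<omega>" for t
    unfolding mean_sum_def esum_def by (simp add: sum.distrib)
  then have A_eq: "A_stat (\<lambda>t \<omega>. mu t + e t \<omega>) T \<omega>
      = 1 / sqrt (real T) * Max ((\<lambda>t. \<bar>cusum_drift t + b t\<bar>) ` {1..T})"
    unfolding A_stat_def cusum_drift_def b_def by (simp add: algebra_simps)
  have "\<bar>cusum_drift ts\<bar> = real ts * (real T - real ts) * \<bar>jump\<bar> / real T"
    using abs_cusum_drift[of ts] change_point by simp
  moreover have "real (T - ts) = real T - real ts" "0 < real T"
    using change_point by auto
  ultimately have drift_eq: "real T powr (-3/2) * real ts * real (T - ts) * \<bar>mu (ts + 1) - mu ts\<bar>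
      = 1 / sqrt (real T) * \<bar>cusum_drift ts\<bar>"
    using powr_minus_three_halves[of "real T"] by (simp add: jump_def)
  have "\<bar>Max ((\<lambda>t. \<bar>cusum_drift t + b t\<bar>) ` {1..T}) - \<bar>cusum_drift ts\<bar>\<bar> \<le> 2 * esum_max T \<omega>"
  proof (rule Max_abs_add_le)
    show "ts \<in> {1..T}" using change_point by simp
    show "\<forall>t\<in>{1..T}. \<bar>cusum_drift t\<bar> \<le> \<bar>cusum_drift ts\<bar>"
      using abs_cusum_drift_le by simp
    show "\<forall>t\<in>{1..T}. \<bar>b t\<bar> \<le> 2 * esum_max T \<omega>"
    proof
      fix t assume t: "t \<in> {1..T}"
      have "\<bar>real t / real T * esum T \<omega>\<bar> \<le> 1 * \<bar>esum T \<omega>\<bar>"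
        unfolding abs_mult using t by (intro mult_right_mono) auto
      moreover have "\<bar>b t\<bar> \<le> \<bar>esum t \<omega>\<bar> + \<bar>real t / real T * esum T \<omega>\<bar>"
        unfolding b_def by (rule abs_triangle_ineq4)
      moreover have "\<bar>esum t \<omega>\<bar> \<le> esum_max T \<omega>" "\<bar>esum T \<omega>\<bar> \<le> esum_max T \<omega>"
        using t by (auto intro: esum_max_ge)
      ultimately show "\<bar>b t\<bar> \<le> 2 * esum_max T \<omega>" by linarith
    qed
  qed simp
  then have "1 / sqrt (real T) * \<bar>Max ((\<lambda>t. \<bar>cusum_drift t + b t\<bar>) ` {1..T}) - \<bar>cusum_drift ts\<bar>\<bar>
      \<le> 2 * (esum_max T \<omega> / sqrt (real T))"
    using mult_left_mono[of _ _ "1 / sqrt (real T)"] by fastforce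
  moreover have "\<bar>1 / sqrt (real T)\<bar> = 1 / sqrt (real T)" by simp
  ultimately show ?thesis
    unfolding A_eq drift_eq right_diff_distrib[symmetric] abs_mult by simp
qed

lemma D_stat_deviation:
  assumes "single_change_mean mu ts T" and m: "1 \<le> m T" "2 * m T \<le> T"
  shows "\<bar>sqrt (real (m T)) * D_stat (\<lambda>t \<omega>. mu t + e t \<omega>) T (m T) \<omega>
           - real (min (min ts (T - ts)) (m T)) / sqrt (real (m T)) * \<bar>mu (ts + 1) - mu ts\<bar>\<bar>
         \<le> D_noise m T \<omega>"
proof -
  interpret single_change_mean mu ts T by fact
  let ?s = "sqrt (real (m T))"
  define b where "b t = esum t \<omega> / real t - (esum T \<omega> - esum t \<omega>) / real (T - t)" for t
  have D_eq: "D_stat (\<lambda>t \<omega>. mu t + e t \<omega>) T (m T) \<omega> = Max ((\<lambda>t. \<bar>diff_drift t + b t\<bar>) ` {m T..T - m T})"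
    unfolding D_stat_def
  proof (intro arg_cong[where f = Max] image_cong refl)
    fix t assume "t \<in> {m T..T - m T}"
    then have "t \<le> T" by auto
    have left: "(\<Sum>s=1..t. mu s + e s \<omega>) = mean_sum t + esum t \<omega>"
      unfolding mean_sum_def esum_def by (simp add: sum.distrib)
    have "(\<Sum>s=t+1..T. mu s + e s \<omega>) = (\<Sum>s=t+1..T. mu s) + (\<Sum>s=t+1..T. e s \<omega>)"
      by (simp add: sum.distrib)
    moreover have "mean_sum T = mean_sum t + (\<Sum>s=t+1..T. mu s)"
      unfolding mean_sum_def by (rule sum_atLeastAtMost_split[OF \<open>t \<le> T\<close>])
    moreover have "esum T \<omega> = esum t \<omega> + (\<Sum>s=t+1..T. e s \<omega>)"
      by (rule esum_split[OF \<open>t \<le> T\<close>])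
    ultimately have right: "(\<Sum>s=t+1..T. mu s + e s \<omega>) = (mean_sum T - mean_sum t) + (esum T \<omega> - esum t \<omega>)"
      by simp
    show "\<bar>(\<Sum>s=1..t. mu s + e s \<omega>) / real t - (\<Sum>s=t+1..T. mu s + e s \<omega>) / real (T - t)\<bar>
        = \<bar>diff_drift t + b t\<bar>"
      unfolding left right diff_drift_def b_def by (simp add: add_divide_distrib diff_divide_distrib algebra_simps)
  qed
  have s_pos: "0 < ?s" using m by simp
  have "\<bar>Max ((\<lambda>t. \<bar>diff_drift t + b t\<bar>) ` {m T..T - m T}) - \<bar>diff_drift (diff_drift_argmax (m T))\<bar>\<bar>
      \<le> D_noise m T \<omega> / ?s"
  proof (rule Max_abs_add_le)
    show "diff_drift_argmax (m T) \<in> {m T..T - m T}"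
      using abs_diff_drift_argmax(1)[OF m] .
    show "\<forall>t\<in>{m T..T - m T}. \<bar>diff_drift t\<bar> \<le> \<bar>diff_drift (diff_drift_argmax (m T))\<bar>"
      using abs_diff_drift_le[OF m(1)] abs_diff_drift_argmax(2)[OF m] by simp
    show "\<forall>t\<in>{m T..T - m T}. \<bar>b t\<bar> \<le> D_noise m T \<omega> / ?s"
    proof
      fix t assume "t \<in> {m T..T - m T}"
      then have "?s * \<bar>b t\<bar> \<le> D_noise m T \<omega>"
        unfolding b_def by (intro D_noise_bound[where m = m and T = T, OF m]) auto
      then show "\<bar>b t\<bar> \<le> D_noise m T \<omega> / ?s"
        using s_pos by (simp add: le_divide_eq mult.commute)
    qed
  qed simp
  then have deviation: "?s * \<bar>Max ((\<lambda>t. \<bar>diff_drift t + b t\<bar>) ` {m T..T - m T}) - \<bar>diff_drift (diff_drift_argmax (m T))\<bar>\<bar>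
      \<le> D_noise m T \<omega>"
    using s_pos by (simp add: le_divide_eq mult.commute)
  have drift: "?s * \<bar>diff_drift (diff_drift_argmax (m T))\<bar>
      = real (min (min ts (T - ts)) (m T)) / ?s * \<bar>mu (ts + 1) - mu ts\<bar>"
  proof -
    have q: "x / ?s / ?s = x / real (m T)" for x
      by (simp add: divide_divide_eq_left)
    show ?thesis
      unfolding abs_diff_drift_argmax(2)[OF m] jump_def q[symmetric] using s_pos by (simp add: field_simps)
  qed
  have "\<bar>?s * Max ((\<lambda>t. \<bar>diff_drift t + b t\<bar>) ` {m T..T - m T})
      - real (min (min ts (T - ts)) (m T)) / ?s * \<bar>mu (ts + 1) - mu ts\<bar>\<bar>
      = ?s * \<bar>Max ((\<lambda>t. \<bar>diff_drift t + b t\<bar>) ` {m T..T - m T}) - \<bar>diff_drift (diff_drift_argmax (m T))\<bar>\<bar>"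
    unfolding drift[symmetric] right_diff_distrib[symmetric] abs_mult by simp
  with deviation show ?thesis
    unfolding D_eq by simp
qed

lemma A_stat_diverges_iff:
  assumes change: "\<forall>\<^sub>F T in sequentially. single_change_mean (mu T) (tstar T) T"
  shows "diverges_in_prob M (\<lambda>T \<omega>. A_stat (\<lambda>t \<omega>. mu T t + e t \<omega>) T \<omega>) \<longleftrightarrow>
         filterlim (\<lambda>T. real T powr (-3/2) * real (tstar T) * real (T - tstar T)
                        * \<bar>mu T (tstar T + 1) - mu T (tstar T)\<bar>) at_top sequentially"
proof (rule diverges_in_prob_iff_filterlim[OF prob_space _ bounded_in_prob_cmult[OF bounded_in_prob_esum_max, of 2]])
  show "{\<omega>\<in>space M. A_stat (\<lambda>t \<omega>. mu T t + e t \<omega>) T \<omega> \<le> C} \<in> sets M" for T C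
    using measurable_e by measurable
  show "\<forall>\<^sub>F T in sequentially. \<forall>\<omega>\<in>space M. \<bar>A_stat (\<lambda>t \<omega>. mu T t + e t \<omega>) T \<omega>
          - real T powr (-3/2) * real (tstar T) * real (T - tstar T) * \<bar>mu T (tstar T + 1) - mu T (tstar T)\<bar>\<bar>
        \<le> 2 * (esum_max T \<omega> / sqrt (real T))"
    using change by eventually_elim (blast intro: A_stat_deviation)
qed simp

lemma D_stat_diverges_iff:
  assumes change: "\<forall>\<^sub>F T in sequentially. single_change_mean (mu T) (tstar T) T"
    and tT: "filterlim tT at_top sequentially" "(\<lambda>T. real (tT T) / real T) \<longlonglongrightarrow> 0"
  shows "diverges_in_prob M (\<lambda>T \<omega>. sqrt (real (tT T)) * D_stat (\<lambda>t \<omega>. mu T t + e t \<omega>) T (tT T) \<omega>) \<longleftrightarrow>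
         filterlim (\<lambda>T. real (min (min (tstar T) (T - tstar T)) (tT T)) / sqrt (real (tT T))
                        * \<bar>mu T (tstar T + 1) - mu T (tstar T)\<bar>) at_top sequentially"
proof -
  have large: "\<forall>\<^sub>F T in sequentially. 1 \<le> tT T"
    using tT(1) by (simp add: filterlim_at_top)
  have "\<forall>\<^sub>F T in sequentially. real (tT T) / real T < 1/2 \<and> 0 < T"
    using order_tendstoD(2)[OF tT(2), of "1/2"] eventually_gt_at_top[of 0] by (auto elim: eventually_conj)
  then have small: "\<forall>\<^sub>F T in sequentially. 2 * tT T \<le> T"
  proof eventually_elim
    case (elim T)
    then have "real (2 * tT T) < real T" by (auto simp: divide_less_eq)
    then show ?case by (simp only: of_nat_less_iff)
  qed
  show ?thesis
  proof (rule diverges_in_prob_iff_filterlim[OF prob_space _ bounded_in_prob_D_noise[OF large]])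
    show "{\<omega>\<in>space M. sqrt (real (tT T)) * D_stat (\<lambda>t \<omega>. mu T t + e t \<omega>) T (tT T) \<omega> \<le> C} \<in> sets M" for T C
      using measurable_e by measurable
    show "\<forall>\<^sub>F T in sequentially. \<forall>\<omega>\<in>space M.
        \<bar>sqrt (real (tT T)) * D_stat (\<lambda>t \<omega>. mu T t + e t \<omega>) T (tT T) \<omega>
          - real (min (min (tstar T) (T - tstar T)) (tT T)) / sqrt (real (tT T))
            * \<bar>mu T (tstar T + 1) - mu T (tstar T)\<bar>\<bar> \<le> D_noise tT T \<omega>"
      using change large small by eventually_elim (blast intro: D_stat_deviation)
  qed
qed

end

lemma assumption_A_strong_approximation:
  assumes "prob_space M" "\<And>t. e t \<in> borel_measurable M" "assumption_A M e"
  shows "\<exists>sig kap W1 W2. strong_approximation M e sig kap W1 W2"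
  using assms unfolding assumption_A_def strong_approximation_def by blast

theorem theorem4p1:
  fixes M :: "'a measure"
    and e :: "nat \<Rightarrow> 'a \<Rightarrow> real"
    and mu :: "nat \<Rightarrow> nat \<Rightarrow> real"
    and tstar :: "nat \<Rightarrow> nat"
  assumes "prob_space M"
    and "\<And>t. e t \<in> borel_measurable M"
    and "\<And>t. t \<ge> 1 \<Longrightarrow> integrable M (e t) \<and> integral\<^sup>L M (e t) = 0"
    and "\<forall>\<^sub>F T in sequentially. 1 < tstar T \<and> tstar T < T \<and>
           (\<forall>t\<in>{1..T}. mu T t = (if t \<le> tstar T then mu T 1 else mu T T))"
    and "assumption_A M e"
  shows "(diverges_in_prob M (\<lambda>T \<omega>. A_stat (\<lambda>t \<omega>. mu T t + e t \<omega>) T \<omega>) \<longleftrightarrow>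
            filterlim (\<lambda>T. real T powr (-3/2) * real (tstar T) * real (T - tstar T)
                           * \<bar>mu T (tstar T + 1) - mu T (tstar T)\<bar>) at_top sequentially)
       \<and> (\<forall>tT :: nat \<Rightarrow> nat. filterlim tT at_top sequentially \<and>
            ((\<lambda>T. real (tT T) / real T) \<longlonglongrightarrow> 0) \<longrightarrow>
            (diverges_in_prob M (\<lambda>T \<omega>. sqrt (real (tT T)) * D_stat (\<lambda>t \<omega>. mu T t + e t \<omega>) T (tT T) \<omega>) \<longleftrightarrow>
             filterlim (\<lambda>T. real (min (min (tstar T) (T - tstar T)) (tT T)) / sqrt (real (tT T))
                           * \<bar>mu T (tstar T + 1) - mu T (tstar T)\<bar>) at_top sequentially))"
proof -
  obtain sig kap W1 W2 where "strong_approximation M e sig kap W1 W2"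
    using assumption_A_strong_approximation[OF assms(1,2,5)] by blast
  then interpret strong_approximation M e sig kap W1 W2 .
  have change: "\<forall>\<^sub>F T in sequentially. single_change_mean (mu T) (tstar T) T"
    using assms(4) unfolding single_change_mean_def by (simp only: conj_assoc)
  show ?thesis
    using A_stat_diverges_iff[OF change] D_stat_diverges_iff[OF change] by (intro conjI allI impI) auto
qed

end
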